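(* Let $\Omega\subset\mathbb R^2$ be a bounded connected domain with smooth boundary (possibly with holes), $B\in C^\infty(\overline\Omega)$ with $B>0$, and $\psi_0$ the solution of $\Delta\psi_0=B$ in $\Omega$, $\psi_0=0$ on $\partial\Omega$. Then for every real ${\bf A}\in C^1(\overline\Omega;\mathbb R^2)$ with $\partial_{x_1}A_2-\partial_{x_2}A_1=B$, \[ \liminf_{h\to0^+}h\log\lambda^D_{P_-}(h,{\bf A},B,\Omega)\ \ge\ 2\inf\psi_0 . \]
   Context: $\lambda^D_{P_-}(h,{\bf A},B,\Omega)=\inf_{u\in H^1_0(\Omega)\setminus\{0\}}\big(\|(hD-{\bf A})u\|^2-h\int_\Omega B|u|^2\big)/\|u\|^2$, $D=-i\nabla$, the ground state energy of the Dirichlet Pauli operator $(hD_{x_1}-A_1)^2+(hD_{x_2}-A_2)^2-hB$. *)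

theory Defs
  imports "HOL-Analysis.Analysis"
begin

definition pd1 :: "(real \<times> real \<Rightarrow> 'b::real_normed_vector) \<Rightarrow> real \<times> real \<Rightarrow> 'b" where
  "pd1 f x = frechet_derivative f (at x) (1, 0)"

definition pd2 :: "(real \<times> real \<Rightarrow> 'b::real_normed_vector) \<Rightarrow> real \<times> real \<Rightarrow> 'b" where
  "pd2 f x = frechet_derivative f (at x) (0, 1)"

fun Ck_on :: "nat \<Rightarrow> (real \<times> real) set \<Rightarrow> (real \<times> real \<Rightarrow> 'b::real_normed_vector) \<Rightarrow> bool" where
  "Ck_on 0 U f = continuous_on U f"
| "Ck_on (Suc k) U f =
     ((\<forall>x\<in>U. f differentiable (at x)) \<and> continuous_on U f \<and> Ck_on k U (pd1 f) \<and> Ck_on k U (pd2 f))"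

definition smooth_on :: "(real \<times> real) set \<Rightarrow> (real \<times> real \<Rightarrow> 'b::real_normed_vector) \<Rightarrow> bool" where
  "smooth_on U f \<longleftrightarrow> (\<forall>k. Ck_on k U f)"

definition Ck_closure :: "nat \<Rightarrow> (real \<times> real) set \<Rightarrow> (real \<times> real \<Rightarrow> 'b::real_normed_vector) \<Rightarrow> bool" where
  "Ck_closure k \<Omega> f \<longleftrightarrow> (\<exists>U. open U \<and> closure \<Omega> \<subseteq> U \<and> Ck_on k U f)"

definition smooth_closure :: "(real \<times> real) set \<Rightarrow> (real \<times> real \<Rightarrow> 'b::real_normed_vector) \<Rightarrow> bool" where
  "smooth_closure \<Omega> f \<longleftrightarrow> (\<exists>U. open U \<and> closure \<Omega> \<subseteq> U \<and> smooth_on U f)"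

definition smooth_bounded_domain :: "(real \<times> real) set \<Rightarrow> bool" where
  "smooth_bounded_domain \<Omega> \<longleftrightarrow> open \<Omega> \<and> bounded \<Omega> \<and> connected \<Omega> \<and> \<Omega> \<noteq> {} \<and>
     (\<forall>p\<in>frontier \<Omega>. \<exists>U \<phi>. open U \<and> p \<in> U \<and> smooth_on U (\<phi> :: real \<times> real \<Rightarrow> real) \<and>
        (\<forall>x\<in>U. (pd1 \<phi> x, pd2 \<phi> x) \<noteq> (0, 0)) \<and>
        \<Omega> \<inter> U = {x\<in>U. \<phi> x < 0})"

text \<open>Test functions: complex-valued C^1 functions with compact support inside Omega
  (dense in H^1_0(Omega)).\<close>
definition test_fun :: "(real \<times> real) set \<Rightarrow> (real \<times> real \<Rightarrow> complex) \<Rightarrow> bool" where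
  "test_fun \<Omega> u \<longleftrightarrow> Ck_on 1 UNIV u \<and> compact (closure {x. u x \<noteq> 0}) \<and>
     closure {x. u x \<noteq> 0} \<subseteq> \<Omega>"

text \<open>Rayleigh quotient of the Pauli operator (hD - A)^2 - hB, D = -i nabla.\<close>
definition pauli_quotient ::
  "real \<Rightarrow> (real \<times> real \<Rightarrow> real) \<Rightarrow> (real \<times> real \<Rightarrow> real) \<Rightarrow> (real \<times> real \<Rightarrow> real)
    \<Rightarrow> (real \<times> real) set \<Rightarrow> (real \<times> real \<Rightarrow> complex) \<Rightarrow> real" where
  "pauli_quotient h A1 A2 B \<Omega> u =
     (integral \<Omega> (\<lambda>x. (cmod (- \<i> * complex_of_real h * pd1 u x - complex_of_real (A1 x) * u x))\<^sup>2
                      + (cmod (- \<i> * complex_of_real h * pd2 u x - complex_of_real (A2 x) * u x))\<^sup>2)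
      - h * integral \<Omega> (\<lambda>x. B x * (cmod (u x))\<^sup>2))
     / integral \<Omega> (\<lambda>x. (cmod (u x))\<^sup>2)"

definition pauli_lambda ::
  "real \<Rightarrow> (real \<times> real \<Rightarrow> real) \<Rightarrow> (real \<times> real \<Rightarrow> real) \<Rightarrow> (real \<times> real \<Rightarrow> real)
    \<Rightarrow> (real \<times> real) set \<Rightarrow> real" where
  "pauli_lambda h A1 A2 B \<Omega> =
     Inf {pauli_quotient h A1 A2 B \<Omega> u | u. test_fun \<Omega> u \<and> (\<exists>x. u x \<noteq> 0)}"

end

theory Submission
  imports Defs
begin

text \<open>
  For a test function \<open>u\<close> the Pauli identity
  \<open>\<parallel>\<Pi>\<^sub>1u\<parallel>\<^sup>2 + \<parallel>\<Pi>\<^sub>2u\<parallel>\<^sup>2 = \<parallel>(\<Pi>\<^sub>1 + i\<Pi>\<^sub>2)u\<parallel>\<^sup>2 + h\<integral>B|u|\<^sup>2\<close>, where \<open>\<Pi> = hD - A\<close> and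
  \<open>B = curl A\<close>, turns the Pauli quotient into \<open>\<parallel>(\<Pi>\<^sub>1 + i\<Pi>\<^sub>2)u\<parallel>\<^sup>2 / \<parallel>u\<parallel>\<^sup>2\<close>.
  Since \<open>\<Delta>\<psi>\<^sub>0 = B\<close>, the potential \<open>A' = A + (\<partial>\<^sub>2\<psi>\<^sub>0, -\<partial>\<^sub>1\<psi>\<^sub>0)\<close> is curl free, and
  \<open>w = e\<^bsup>\<psi>\<^sub>0/h\<^esup>u\<close> satisfies \<open>(\<Pi>'\<^sub>1 + i\<Pi>'\<^sub>2)w = e\<^bsup>\<psi>\<^sub>0/h\<^esup>(\<Pi>\<^sub>1 + i\<Pi>\<^sub>2)u\<close>, whose norm is
  at most \<open>\<parallel>(\<Pi>\<^sub>1 + i\<Pi>\<^sub>2)u\<parallel>\<close> because \<open>\<psi>\<^sub>0 \<le> 0\<close> by the maximum principle. The Pauli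
  identity for the curl free \<open>A'\<close> gives \<open>\<parallel>\<Pi>'\<^sub>1w\<parallel> \<le> \<parallel>(\<Pi>'\<^sub>1 + i\<Pi>'\<^sub>2)w\<parallel>\<close>, and on a domain
  contained in the strip \<open>|x\<^sub>1| \<le> L\<close> a Poincare type inequality gives
  \<open>\<parallel>w\<parallel>\<^sup>2 \<le> (4L\<^sup>2/h\<^sup>2) \<parallel>\<Pi>'\<^sub>1w\<parallel>\<^sup>2\<close>. Together with \<open>|w| \<ge> e\<^bsup>inf \<psi>\<^sub>0/h\<^esup>|u|\<close> this bounds the
  ground state energy below by \<open>h\<^sup>2 e\<^bsup>2 inf \<psi>\<^sub>0/h\<^esup> / (4L\<^sup>2)\<close>, and \<open>h log\<close> of this bound
  tends to \<open>2 inf \<psi>\<^sub>0\<close>.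
\<close>

section \<open>Partial derivatives in the plane\<close>

lemma pd1_eq_derivative: "(f has_derivative f') (at x) \<Longrightarrow> pd1 f x = f' (1, 0)"
  unfolding pd1_def by (metis frechet_derivative_at)

lemma pd2_eq_derivative: "(f has_derivative f') (at x) \<Longrightarrow> pd2 f x = f' (0, 1)"
  unfolding pd2_def by (metis frechet_derivative_at)

lemma has_derivative_pd:
  assumes "f differentiable (at x)"
  shows "(f has_derivative (\<lambda>v. fst v *\<^sub>R pd1 f x + snd v *\<^sub>R pd2 f x)) (at x)"
proof -
  let ?D = "frechet_derivative f (at x)"
  have D: "(f has_derivative ?D) (at x)"
    using assms by (simp add: frechet_derivative_works)
  then have lin: "linear ?D" using has_derivative_linear by blast
  have "?D v = fst v *\<^sub>R pd1 f x + snd v *\<^sub>R pd2 f x" for v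
  proof -
    have "?D v = ?D (fst v *\<^sub>R (1, 0) + snd v *\<^sub>R (0, 1))" by (cases v) simp
    also have "\<dots> = fst v *\<^sub>R ?D (1, 0) + snd v *\<^sub>R ?D (0, 1)"
      by (simp only: linear_add[OF lin] linear_scale[OF lin])
    finally show ?thesis by (simp add: pd1_def pd2_def)
  qed
  with D show ?thesis by (metis (no_types, lifting) ext)
qed

lemma pd_vanishing_outside:
  assumes "compact K" "\<And>y. y \<notin> K \<Longrightarrow> f y = 0" "x \<notin> K"
  shows "pd1 f x = 0" "pd2 f x = 0" "f differentiable (at x)"
proof -
  have "(f has_derivative (\<lambda>v. 0)) (at x)"
    by (rule has_derivative_transform_within_open[OF has_derivative_const[of 0], of "- K"])
      (use assms compact_imp_closed in auto)
  then show "pd1 f x = 0" "pd2 f x = 0" "f differentiable (at x)"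
    by (auto simp: pd1_eq_derivative pd2_eq_derivative intro: differentiableI)
qed

lemma pd_add:
  fixes f g :: "real \<times> real \<Rightarrow> 'a::real_normed_vector"
  assumes "f differentiable (at x)" "g differentiable (at x)"
  shows "(\<lambda>x. f x + g x) differentiable (at x)"
    "pd1 (\<lambda>x. f x + g x) x = pd1 f x + pd1 g x" "pd2 (\<lambda>x. f x + g x) x = pd2 f x + pd2 g x"
  using has_derivative_add[OF has_derivative_pd[OF assms(1)] has_derivative_pd[OF assms(2)]]
  by (auto simp: pd1_eq_derivative pd2_eq_derivative intro: differentiableI)

lemma pd_diff:
  fixes f g :: "real \<times> real \<Rightarrow> 'a::real_normed_vector"
  assumes "f differentiable (at x)" "g differentiable (at x)"
  shows "(\<lambda>x. f x - g x) differentiable (at x)"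
    "pd1 (\<lambda>x. f x - g x) x = pd1 f x - pd1 g x" "pd2 (\<lambda>x. f x - g x) x = pd2 f x - pd2 g x"
  using has_derivative_diff[OF has_derivative_pd[OF assms(1)] has_derivative_pd[OF assms(2)]]
  by (auto simp: pd1_eq_derivative pd2_eq_derivative intro: differentiableI)

lemma pd_mult:
  fixes f g :: "real \<times> real \<Rightarrow> 'a::real_normed_algebra"
  assumes "f differentiable (at x)" "g differentiable (at x)"
  shows "(\<lambda>x. f x * g x) differentiable (at x)"
    "pd1 (\<lambda>x. f x * g x) x = pd1 f x * g x + f x * pd1 g x"
    "pd2 (\<lambda>x. f x * g x) x = pd2 f x * g x + f x * pd2 g x"
  using has_derivative_mult[OF has_derivative_pd[OF assms(1)] has_derivative_pd[OF assms(2)]]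
  by (auto simp: pd1_eq_derivative pd2_eq_derivative algebra_simps intro: differentiableI)

lemma pd_divide_const:
  fixes f :: "real \<times> real \<Rightarrow> real"
  assumes "f differentiable (at x)"
  shows "(\<lambda>x. f x / c) differentiable (at x)"
    "pd1 (\<lambda>x. f x / c) x = pd1 f x / c" "pd2 (\<lambda>x. f x / c) x = pd2 f x / c"
proof -
  have D: "((\<lambda>x. f x / c) has_derivative (\<lambda>v. (fst v * pd1 f x + snd v * pd2 f x) / c)) (at x)"
    using has_derivative_mult_left[OF has_derivative_pd[OF assms], of "inverse c"]
    by (simp add: divide_inverse)
  show "(\<lambda>x. f x / c) differentiable (at x)" using D by (rule differentiableI)
  show "pd1 (\<lambda>x. f x / c) x = pd1 f x / c" "pd2 (\<lambda>x. f x / c) x = pd2 f x / c"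
    using pd1_eq_derivative[OF D] pd2_eq_derivative[OF D] by simp_all
qed

lemma pd_shift:
  fixes f :: "real \<times> real \<Rightarrow> 'a::real_normed_vector"
  assumes "f differentiable (at (x + \<sigma>))"
  shows "(\<lambda>x. f (x + \<sigma>)) differentiable (at x)"
    "pd1 (\<lambda>x. f (x + \<sigma>)) x = pd1 f (x + \<sigma>)" "pd2 (\<lambda>x. f (x + \<sigma>)) x = pd2 f (x + \<sigma>)"
proof -
  have "((\<lambda>x. x + \<sigma>) has_derivative (\<lambda>v. v)) (at x)"
    by (auto intro!: derivative_eq_intros)
  from has_derivative_compose[OF this has_derivative_pd[OF assms]]
  have D: "((\<lambda>x. f (x + \<sigma>)) has_derivative
      (\<lambda>v. fst v *\<^sub>R pd1 f (x + \<sigma>) + snd v *\<^sub>R pd2 f (x + \<sigma>))) (at x)" .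
  show "(\<lambda>x. f (x + \<sigma>)) differentiable (at x)" using D by (rule differentiableI)
  show "pd1 (\<lambda>x. f (x + \<sigma>)) x = pd1 f (x + \<sigma>)" "pd2 (\<lambda>x. f (x + \<sigma>)) x = pd2 f (x + \<sigma>)"
    using pd1_eq_derivative[OF D] pd2_eq_derivative[OF D] by simp_all
qed

lemma pd_Re_Im:
  fixes u :: "real \<times> real \<Rightarrow> complex"
  assumes "u differentiable (at x)"
  shows "(\<lambda>x. Re (u x)) differentiable (at x)"
    "pd1 (\<lambda>x. Re (u x)) x = Re (pd1 u x)" "pd2 (\<lambda>x. Re (u x)) x = Re (pd2 u x)"
    "(\<lambda>x. Im (u x)) differentiable (at x)"
    "pd1 (\<lambda>x. Im (u x)) x = Im (pd1 u x)" "pd2 (\<lambda>x. Im (u x)) x = Im (pd2 u x)"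
  using bounded_linear.has_derivative[OF bounded_linear_Re has_derivative_pd[OF assms]]
    bounded_linear.has_derivative[OF bounded_linear_Im has_derivative_pd[OF assms]]
  by (auto simp: pd1_eq_derivative pd2_eq_derivative intro: differentiableI)

lemma pd_cmod_sq:
  fixes u :: "real \<times> real \<Rightarrow> complex"
  assumes "u differentiable (at x)"
  shows "(\<lambda>x. (cmod (u x))\<^sup>2) differentiable (at x)"
    "pd1 (\<lambda>x. (cmod (u x))\<^sup>2) x = 2 * (Re (u x) * Re (pd1 u x) + Im (u x) * Im (pd1 u x))"
    "pd2 (\<lambda>x. (cmod (u x))\<^sup>2) x = 2 * (Re (u x) * Re (pd2 u x) + Im (u x) * Im (pd2 u x))"
proof -
  have sq: "(\<lambda>x. (cmod (u x))\<^sup>2) = (\<lambda>x. Re (u x) * Re (u x) + Im (u x) * Im (u x))"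
    unfolding cmod_power2 by (simp add: power2_eq_square)
  note R = pd_Re_Im(1-3)[OF assms] and I = pd_Re_Im(4-6)[OF assms]
  note RR = pd_mult[OF R(1) R(1)] and II = pd_mult[OF I(1) I(1)]
  show "(\<lambda>x. (cmod (u x))\<^sup>2) differentiable (at x)"
    "pd1 (\<lambda>x. (cmod (u x))\<^sup>2) x = 2 * (Re (u x) * Re (pd1 u x) + Im (u x) * Im (pd1 u x))"
    "pd2 (\<lambda>x. (cmod (u x))\<^sup>2) x = 2 * (Re (u x) * Re (pd2 u x) + Im (u x) * Im (pd2 u x))"
    unfolding sq using pd_add[OF RR(1) II(1)] RR II R I by simp_all
qed

definition C1_on :: "(real \<times> real) set \<Rightarrow> (real \<times> real \<Rightarrow> 'b::real_normed_vector) \<Rightarrow> bool" where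
  "C1_on V f \<longleftrightarrow> (\<forall>x\<in>V. f differentiable (at x)) \<and> continuous_on V f \<and>
     continuous_on V (pd1 f) \<and> continuous_on V (pd2 f)"

lemma Ck_on_1_iff: "Ck_on 1 V f \<longleftrightarrow> C1_on V f"
  by (auto simp: C1_on_def)

lemma Ck_on_2_imp_C1_on:
  assumes "Ck_on 2 V f"
  shows "C1_on V f" "C1_on V (pd1 f)" "C1_on V (pd2 f)"
  using assms by (simp_all add: numeral_2_eq_2 C1_on_def)

lemma C1_on_subset: "C1_on U f \<Longrightarrow> V \<subseteq> U \<Longrightarrow> C1_on V f"
  unfolding C1_on_def by (auto intro: continuous_on_subset)

lemma Ck_closure_1_imp_C1_on:
  assumes "Ck_closure 1 \<Omega> f"
  shows "C1_on \<Omega> f"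
proof -
  obtain U where "closure \<Omega> \<subseteq> U" "C1_on U f"
    using assms unfolding Ck_closure_def Ck_on_1_iff by blast
  then show ?thesis using C1_on_subset closure_subset by (metis subset_trans)
qed

lemma C1_on_add_diff:
  fixes f g :: "real \<times> real \<Rightarrow> real"
  assumes f: "C1_on V f" and g: "C1_on V g"
  shows "C1_on V (\<lambda>x. f x + g x)" "C1_on V (\<lambda>x. f x - g x)"
proof -
  have d: "f differentiable (at x)" "g differentiable (at x)" if "x \<in> V" for x
    using f g that unfolding C1_on_def by blast+
  have c: "continuous_on V f" "continuous_on V (pd1 f)" "continuous_on V (pd2 f)"
    "continuous_on V g" "continuous_on V (pd1 g)" "continuous_on V (pd2 g)"
    using f g unfolding C1_on_def by blast+
  have "continuous_on V (pd1 (\<lambda>x. f x + g x))" "continuous_on V (pd2 (\<lambda>x. f x + g x))"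
    "continuous_on V (pd1 (\<lambda>x. f x - g x))" "continuous_on V (pd2 (\<lambda>x. f x - g x))"
    by (auto intro!: continuous_intros c simp: pd_add pd_diff d cong: continuous_on_cong)
  then show "C1_on V (\<lambda>x. f x + g x)" "C1_on V (\<lambda>x. f x - g x)"
    unfolding C1_on_def by (auto intro!: continuous_intros c pd_add pd_diff d)
qed

lemma C1_on_Re_Im:
  fixes u :: "real \<times> real \<Rightarrow> complex"
  assumes u: "C1_on V u"
  shows "C1_on V (\<lambda>x. Re (u x))" "C1_on V (\<lambda>x. Im (u x))"
proof -
  have d: "u differentiable (at x)" if "x \<in> V" for x
    using u that unfolding C1_on_def by blast
  have c: "continuous_on V u" "continuous_on V (pd1 u)" "continuous_on V (pd2 u)"
    using u unfolding C1_on_def by blast+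
  have "continuous_on V (pd1 (\<lambda>x. Re (u x)))" "continuous_on V (pd2 (\<lambda>x. Re (u x)))"
    "continuous_on V (pd1 (\<lambda>x. Im (u x)))" "continuous_on V (pd2 (\<lambda>x. Im (u x)))"
    by (auto intro!: continuous_intros c simp: pd_Re_Im d cong: continuous_on_cong)
  then show "C1_on V (\<lambda>x. Re (u x))" "C1_on V (\<lambda>x. Im (u x))"
    unfolding C1_on_def by (auto intro!: continuous_intros c pd_Re_Im d)
qed

lemma C1_on_cmod_sq:
  fixes u :: "real \<times> real \<Rightarrow> complex"
  assumes u: "C1_on V u"
  shows "C1_on V (\<lambda>x. (cmod (u x))\<^sup>2)"
proof -
  have d: "u differentiable (at x)" if "x \<in> V" for x
    using u that unfolding C1_on_def by blast
  have c: "continuous_on V u" "continuous_on V (pd1 u)" "continuous_on V (pd2 u)"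
    using u unfolding C1_on_def by blast+
  have "continuous_on V (pd1 (\<lambda>x. (cmod (u x))\<^sup>2))" "continuous_on V (pd2 (\<lambda>x. (cmod (u x))\<^sup>2))"
    by (auto intro!: continuous_intros c simp: pd_cmod_sq d cong: continuous_on_cong)
  then show ?thesis
    unfolding C1_on_def by (auto intro!: continuous_intros c pd_cmod_sq d)
qed

lemma C1_on_fst: "C1_on V (fst :: real \<times> real \<Rightarrow> real)" "pd1 (fst :: real \<times> real \<Rightarrow> real) x = 1"
proof -
  have D: "((fst :: real \<times> real \<Rightarrow> real) has_derivative fst) (at x)" for x
    by (rule has_derivative_fst[OF has_derivative_ident])
  have "pd1 (fst :: real \<times> real \<Rightarrow> real) = (\<lambda>x. 1)" "pd2 (fst :: real \<times> real \<Rightarrow> real) = (\<lambda>x. 0)"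
    using pd1_eq_derivative[OF D] pd2_eq_derivative[OF D] by auto
  then show "C1_on V (fst :: real \<times> real \<Rightarrow> real)" "pd1 (fst :: real \<times> real \<Rightarrow> real) x = 1"
    unfolding C1_on_def using D by (auto intro!: continuous_intros differentiableI)
qed

section \<open>Functions of compact support\<close>

lemma bounded_subset_square:
  fixes S :: "(real \<times> real) set"
  assumes "bounded S"
  obtains c where "c > 0" "\<And>x. x \<in> S \<Longrightarrow> \<bar>fst x\<bar> < c \<and> \<bar>snd x\<bar> < c"
proof -
  obtain r where r: "\<And>x. x \<in> S \<Longrightarrow> norm x \<le> r"
    using assms bounded_iff by blast
  have "\<bar>fst x\<bar> < \<bar>r\<bar> + 1 \<and> \<bar>snd x\<bar> < \<bar>r\<bar> + 1" if "x \<in> S" for x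
  proof -
    have "\<bar>fst x\<bar> \<le> norm x" "\<bar>snd x\<bar> \<le> norm x"
      using norm_fst_le[of "fst x" "snd x"] norm_snd_le[of "snd x" "fst x"] by simp_all
    then show ?thesis using r[OF that] by linarith
  qed
  then show ?thesis by (intro that[of "\<bar>r\<bar> + 1"]) auto
qed

lemma continuous_on_UNIV_vanishing_outside:
  fixes \<phi> :: "'n::t2_space \<Rightarrow> 'a::real_normed_vector"
  assumes "open V" "compact K" "K \<subseteq> V" "continuous_on V \<phi>" "\<And>x. x \<notin> K \<Longrightarrow> \<phi> x = 0"
  shows "continuous_on UNIV \<phi>"
proof -
  have "open (- K)" using assms(2) compact_imp_closed by blast
  moreover have "continuous_on (- K) \<phi>"
    by (rule continuous_on_cong[THEN iffD1, OF refl _ continuous_on_const[of _ 0]]) (use assms(5) in auto)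
  ultimately have "continuous_on (V \<union> - K) \<phi>"
    using continuous_on_open_Un[OF assms(1)] assms(4) by blast
  moreover have "V \<union> - K = UNIV" using assms(3) by auto
  ultimately show ?thesis by simp
qed

lemma integral_eq_integral_UNIV:
  fixes \<phi> :: "'n::euclidean_space \<Rightarrow> 'a::banach"
  assumes "\<And>x. x \<notin> S \<Longrightarrow> \<phi> x = 0"
  shows "integral S \<phi> = integral UNIV \<phi>"
proof -
  have "(\<lambda>x. if x \<in> S then \<phi> x else 0) = \<phi>" using assms by auto
  then show ?thesis using integral_restrict_UNIV[of S \<phi>] by simp
qed

lemma integrable_on_UNIV_vanishing_outside:
  fixes \<phi> :: "'n::euclidean_space \<Rightarrow> 'a::banach"
  assumes "open V" "compact K" "K \<subseteq> V" "continuous_on V \<phi>" "\<And>x. x \<notin> K \<Longrightarrow> \<phi> x = 0"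
  shows "\<phi> integrable_on UNIV"
proof -
  have c: "continuous_on UNIV \<phi>"
    by (rule continuous_on_UNIV_vanishing_outside[OF assms])
  obtain a where a: "K \<subseteq> cbox (-a) a"
    using bounded_subset_cbox_symmetric compact_imp_bounded assms(2) by blast
  have "\<phi> integrable_on cbox (-a) a"
    using integrable_continuous continuous_on_subset[OF c] by blast
  then show ?thesis by (rule integrable_on_superset) (use a assms(5) in auto)
qed

lemma integral_UNIV_pos:
  fixes f :: "real \<times> real \<Rightarrow> real"
  assumes c: "continuous_on UNIV f" and nonneg: "\<And>x. f x \<ge> 0"
    and K: "compact K" "\<And>x. x \<notin> K \<Longrightarrow> f x = 0" and pos: "f x0 > 0"
  shows "integral UNIV f > 0"
proof -
  obtain c where c0: "c > 0" and Kc: "\<And>x. x \<in> insert x0 K \<Longrightarrow> \<bar>fst x\<bar> < c \<and> \<bar>snd x\<bar> < c"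
    using bounded_subset_square[of "insert x0 K"] compact_imp_bounded K(1) by auto
  have sub: "x \<in> cbox (-c, -c) (c, c)" if "x \<in> insert x0 K" for x
    using Kc[OF that] by (cases x) (simp add: cbox_Pair_eq abs_less_iff)
  have cQ: "continuous_on (cbox (-c, -c) (c, c)) f"
    using continuous_on_subset[OF c] by blast
  have "integral UNIV f = integral (cbox (-c, -c) (c, c)) f"
    by (rule integral_eq_integral_UNIV[symmetric]) (use K(2) sub in blast)
  moreover have "integral (cbox (-c, -c) (c, c)) f \<ge> 0"
    by (rule integral_nonneg) (auto intro: integrable_continuous cQ nonneg)
  moreover have "integral (cbox (-c, -c) (c, c)) f \<noteq> 0"
  proof
    assume "integral (cbox (-c, -c) (c, c)) f = 0"
    then have "(f has_integral 0) (cbox (-c, -c) (c, c))"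
      using integrable_continuous[OF cQ] by (metis has_integral_integral)
    moreover have "box (-c, -c) (c, c) \<noteq> {}"
      using c0 by (auto simp: box_ne_empty Basis_prod_def)
    ultimately have "f x0 = 0"
      by (rule has_integral_0_cbox_imp_0[OF cQ nonneg]) (use sub in blast)
    then show False using pos by simp
  qed
  ultimately show ?thesis by simp
qed

lemma integral_UNIV_translate:
  fixes \<phi> :: "'n::euclidean_space \<Rightarrow> 'a::banach"
  assumes c: "continuous_on UNIV \<phi>" and K: "compact K" "\<And>x. x \<notin> K \<Longrightarrow> \<phi> x = 0"
  shows "integral UNIV (\<lambda>x. \<phi> (\<tau> + x)) = integral UNIV \<phi>"
proof -
  have "compact ((\<lambda>x. x - \<tau>) ` K)"
    using K(1) by (intro compact_continuous_image) (auto intro!: continuous_intros)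
  then obtain a where a: "(\<lambda>x. x - \<tau>) ` K \<subseteq> cbox (-a) a"
    using bounded_subset_cbox_symmetric compact_imp_bounded by blast
  have z1: "\<phi> (\<tau> + x) = 0" if "x \<notin> cbox (-a) a" for x
  proof -
    have "\<tau> + x \<notin> K" using a that by (force simp: image_iff)
    then show ?thesis using K(2) by blast
  qed
  have z2: "\<phi> x = 0" if "x \<notin> cbox (-a + \<tau>) (a + \<tau>)" for x
  proof -
    have "x - \<tau> \<notin> cbox (-a) a" using that by (simp add: mem_box algebra_simps)
    then have "x \<notin> K" using a by blast
    then show ?thesis using K(2) by blast
  qed
  have "(\<phi> has_integral integral (cbox (-a + \<tau>) (a + \<tau>)) \<phi>) (cbox (-a + \<tau>) (a + \<tau>))"
    using integrable_continuous[OF continuous_on_subset[OF c]] by blast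
  then have "((\<phi> \<circ> (+) \<tau>) has_integral integral (cbox (-a + \<tau>) (a + \<tau>)) \<phi>) (cbox (-a) a)"
    using has_integral_shift_cbox_iff[of \<phi> \<tau>] by blast
  then have "integral (cbox (-a) a) (\<lambda>x. \<phi> (\<tau> + x)) = integral (cbox (-a + \<tau>) (a + \<tau>)) \<phi>"
    by (simp add: integral_unique o_def)
  moreover have "integral UNIV (\<lambda>x. \<phi> (\<tau> + x)) = integral (cbox (-a) a) (\<lambda>x. \<phi> (\<tau> + x))"
    using integral_eq_integral_UNIV[of "cbox (-a) a" "\<lambda>x. \<phi> (\<tau> + x)"] z1 by simp
  moreover have "integral UNIV \<phi> = integral (cbox (-a + \<tau>) (a + \<tau>)) \<phi>"
    using integral_eq_integral_UNIV[of "cbox (-a + \<tau>) (a + \<tau>)" \<phi>] z2 by simp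
  ultimately show ?thesis by simp
qed

lemma uniformly_continuous_on_vanishing_outside:
  fixes \<phi> :: "'n::euclidean_space \<Rightarrow> 'a::real_normed_vector"
  assumes c: "continuous_on UNIV \<phi>" and K: "compact K" "\<And>x. x \<notin> K \<Longrightarrow> \<phi> x = 0"
  shows "uniformly_continuous_on UNIV \<phi>"
  unfolding uniformly_continuous_on_def
proof (intro allI impI)
  fix e :: real assume e: "e > 0"
  obtain r where r: "\<And>x. x \<in> K \<Longrightarrow> norm x \<le> r"
    using compact_imp_bounded[OF K(1)] bounded_iff by blast
  define C where "C = cball (0::'n) (\<bar>r\<bar> + 1)"
  have "uniformly_continuous_on C \<phi>"
    unfolding C_def by (rule compact_uniformly_continuous[OF continuous_on_subset[OF c]]) auto
  then obtain d where d: "d > 0" "\<And>x x'. x \<in> C \<Longrightarrow> x' \<in> C \<Longrightarrow> dist x' x < d \<Longrightarrow> dist (\<phi> x') (\<phi> x) < e"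
    unfolding uniformly_continuous_on_def using e by metis
  have out: "\<phi> x = 0 \<and> \<phi> y = 0" if "x \<notin> C" "dist x y < 1" for x y
  proof -
    have "norm x > \<bar>r\<bar> + 1" using that(1) unfolding C_def by (simp add: dist_norm)
    moreover have "norm x \<le> norm y + dist x y"
      by (metis dist_commute dist_norm norm_triangle_sub add.commute)
    ultimately have "norm y > \<bar>r\<bar>" "norm x > \<bar>r\<bar>" using that(2) by linarith+
    then have "x \<notin> K" "y \<notin> K" using r by (meson abs_ge_self order.trans not_le)+
    then show ?thesis using K(2) by blast
  qed
  show "\<exists>d>0. \<forall>x\<in>UNIV. \<forall>x'\<in>UNIV. dist x' x < d \<longrightarrow> dist (\<phi> x') (\<phi> x) < e"
  proof (intro exI[of _ "min d 1"] conjI ballI impI)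
    show "min d 1 > 0" using d by simp
    fix x x' :: 'n assume xx: "dist x' x < min d 1"
    show "dist (\<phi> x') (\<phi> x) < e"
    proof (cases "x \<in> C \<and> x' \<in> C")
      case True then show ?thesis using d(2) xx by simp
    next
      case False
      then show ?thesis using out[of x x'] out[of x' x] xx e by (auto simp: dist_commute)
    qed
  qed
qed

section \<open>Integration by parts\<close>

lemma has_vector_derivative_pd1:
  assumes "F differentiable (at (x + (s, 0)))"
  shows "((\<lambda>s. F (x + (s, 0))) has_vector_derivative pd1 F (x + (s, 0))) (at s)"
proof -
  have "((\<lambda>s. x + (s, 0)) has_derivative (\<lambda>h. (h, 0))) (at s)"
    by (auto intro!: derivative_eq_intros)
  from has_derivative_compose[OF this has_derivative_pd[OF assms]]
  show ?thesis unfolding has_vector_derivative_def by simp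
qed

lemma has_vector_derivative_pd2:
  assumes "F differentiable (at (x + (0, s)))"
  shows "((\<lambda>s. F (x + (0, s))) has_vector_derivative pd2 F (x + (0, s))) (at s)"
proof -
  have "((\<lambda>s. x + (0, s)) has_derivative (\<lambda>h. (0, h))) (at s)"
    by (auto intro!: derivative_eq_intros)
  from has_derivative_compose[OF this has_derivative_pd[OF assms]]
  show ?thesis unfolding has_vector_derivative_def by simp
qed

lemma integral_pd_eq_0:
  fixes F :: "real \<times> real \<Rightarrow> real"
  assumes d: "\<And>x. F differentiable (at x)" and c: "continuous_on UNIV (pd1 F)" "continuous_on UNIV (pd2 F)"
    and K: "compact K" "\<And>x. x \<notin> K \<Longrightarrow> F x = 0"
  shows "integral UNIV (pd1 F) = 0" "integral UNIV (pd2 F) = 0"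
proof -
  obtain c where c0: "c > 0" and Kc: "\<And>x. x \<in> K \<Longrightarrow> \<bar>fst x\<bar> < c \<and> \<bar>snd x\<bar> < c"
    using bounded_subset_square[of K] compact_imp_bounded K(1) by auto
  let ?Q = "cbox (-c, -c) (c, c)"
  have outQ: "x \<notin> K" if "x \<notin> ?Q" for x
    using that Kc[of x] by (cases x) (auto simp: cbox_Pair_eq abs_less_iff)
  have edge: "F (c, t) = 0" "F (-c, t) = 0" "F (t, c) = 0" "F (t, -c) = 0" for t
    using K(2) Kc by force+
  have line: "integral {-c..c} (\<lambda>s. pd1 F (s, t)) = 0" "integral {-c..c} (\<lambda>s. pd2 F (t, s)) = 0" for t
  proof -
    have "((\<lambda>s. F (s, t)) has_vector_derivative pd1 F (s, t)) (at s)"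
      "((\<lambda>s. F (t, s)) has_vector_derivative pd2 F (t, s)) (at s)" for s
      using has_vector_derivative_pd1[OF d, of "(0, t)" s] has_vector_derivative_pd2[OF d, of "(t, 0)" s]
      by simp_all
    then have "((\<lambda>s. pd1 F (s, t)) has_integral F (c, t) - F (-c, t)) {-c..c}"
      "((\<lambda>s. pd2 F (t, s)) has_integral F (t, c) - F (t, -c)) {-c..c}"
      using fundamental_theorem_of_calculus[of "-c" c "\<lambda>s. F (s, t)" "\<lambda>s. pd1 F (s, t)"]
        fundamental_theorem_of_calculus[of "-c" c "\<lambda>s. F (t, s)" "\<lambda>s. pd2 F (t, s)"] c0
      by (simp_all add: has_vector_derivative_at_within)
    then show "integral {-c..c} (\<lambda>s. pd1 F (s, t)) = 0" "integral {-c..c} (\<lambda>s. pd2 F (t, s)) = 0"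
      using edge by (simp_all add: integral_unique)
  qed
  have "integral UNIV (pd1 F) = integral ?Q (pd1 F)"
    by (rule integral_eq_integral_UNIV[symmetric]) (rule pd_vanishing_outside(1)[OF K outQ])
  also have "\<dots> = integral {-c..c} (\<lambda>s. integral {-c..c} (\<lambda>t. pd1 F (s, t)))"
    using integral_prod_continuous[OF continuous_on_subset[OF c(1)]] by (simp add: cbox_interval)
  also have "\<dots> = integral {-c..c} (\<lambda>t. integral {-c..c} (\<lambda>s. pd1 F (s, t)))"
    using integral_swap_continuous[of "-c" "-c" c c "\<lambda>s t. pd1 F (s, t)"] continuous_on_subset[OF c(1)]
    by (simp add: cbox_interval case_prod_unfold)
  finally show "integral UNIV (pd1 F) = 0" using line(1) by simp
  have "integral UNIV (pd2 F) = integral ?Q (pd2 F)"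
    by (rule integral_eq_integral_UNIV[symmetric]) (rule pd_vanishing_outside(2)[OF K outQ])
  also have "\<dots> = integral {-c..c} (\<lambda>t. integral {-c..c} (\<lambda>s. pd2 F (t, s)))"
    using integral_prod_continuous[OF continuous_on_subset[OF c(2)]] by (simp add: cbox_interval)
  finally show "integral UNIV (pd2 F) = 0" using line(2) by simp
qed

lemma integration_by_parts_pd:
  fixes f g :: "real \<times> real \<Rightarrow> real"
  assumes V: "open V" and K: "compact K" "K \<subseteq> V" and f0: "\<And>x. x \<notin> K \<Longrightarrow> f x = 0"
    and f: "C1_on UNIV f" and g: "C1_on V g"
  shows "integral UNIV (\<lambda>x. g x * pd1 f x) = - integral UNIV (\<lambda>x. f x * pd1 g x)"
    "integral UNIV (\<lambda>x. g x * pd2 f x) = - integral UNIV (\<lambda>x. f x * pd2 g x)"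
    "(\<lambda>x. g x * pd1 f x) integrable_on UNIV" "(\<lambda>x. f x * pd1 g x) integrable_on UNIV"
    "(\<lambda>x. g x * pd2 f x) integrable_on UNIV" "(\<lambda>x. f x * pd2 g x) integrable_on UNIV"
proof -
  define F where "F = (\<lambda>x. f x * g x)"
  have F0: "F x = 0" if "x \<notin> K" for x using f0 that unfolding F_def by simp
  have fd: "f differentiable (at x)" for x using f unfolding C1_on_def by blast
  have gd: "g differentiable (at x)" if "x \<in> V" for x using g that unfolding C1_on_def by blast
  have f'0: "pd1 f x = 0" "pd2 f x = 0" if "x \<notin> K" for x
    using pd_vanishing_outside[OF K(1) f0 that] by simp_all
  have F': "F differentiable (at x) \<and> pd1 F x = g x * pd1 f x + f x * pd1 g x
      \<and> pd2 F x = g x * pd2 f x + f x * pd2 g x" for x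
  proof (cases "x \<in> V")
    case True then show ?thesis unfolding F_def using pd_mult[OF fd gd] by (simp add: mult.commute)
  next
    case False then have "x \<notin> K" using K by auto
    then show ?thesis using pd_vanishing_outside[OF K(1) F0] f0 f'0 by simp
  qed
  have cf: "continuous_on V f" "continuous_on V (pd1 f)" "continuous_on V (pd2 f)"
    using f unfolding C1_on_def by (auto intro: continuous_on_subset)
  have cg: "continuous_on V g" "continuous_on V (pd1 g)" "continuous_on V (pd2 g)"
    using g unfolding C1_on_def by auto
  note int = integrable_on_UNIV_vanishing_outside[OF V K]
  note cont = continuous_on_UNIV_vanishing_outside[OF V K]
  show i: "(\<lambda>x. g x * pd1 f x) integrable_on UNIV" "(\<lambda>x. f x * pd1 g x) integrable_on UNIV"
    "(\<lambda>x. g x * pd2 f x) integrable_on UNIV" "(\<lambda>x. f x * pd2 g x) integrable_on UNIV"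
    by (rule int; auto intro!: continuous_intros cf cg simp: f0 f'0)+
  have dF: "F differentiable (at x)" for x using F' by blast
  have pdF: "pd1 F = (\<lambda>x. g x * pd1 f x + f x * pd1 g x)" "pd2 F = (\<lambda>x. g x * pd2 f x + f x * pd2 g x)"
    using F' by (simp_all add: fun_eq_iff)
  have "continuous_on UNIV (pd1 F)" "continuous_on UNIV (pd2 F)"
    unfolding pdF by (rule cont; auto intro!: continuous_intros cf cg simp: f0 f'0)+
  then have "integral UNIV (\<lambda>x. g x * pd1 f x + f x * pd1 g x) = 0"
    "integral UNIV (\<lambda>x. g x * pd2 f x + f x * pd2 g x) = 0"
    using integral_pd_eq_0[OF dF _ _ K(1) F0] unfolding pdF by blast+
  then show "integral UNIV (\<lambda>x. g x * pd1 f x) = - integral UNIV (\<lambda>x. f x * pd1 g x)"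
    "integral UNIV (\<lambda>x. g x * pd2 f x) = - integral UNIV (\<lambda>x. f x * pd2 g x)"
    unfolding integral_add[OF i(1,2)] integral_add[OF i(3,4)] by linarith+
qed

lemma mvt_pd1:
  fixes F :: "real \<times> real \<Rightarrow> real"
  assumes d: "\<And>x. F differentiable (at x)"
  obtains z where "\<bar>z\<bar> \<le> \<bar>t\<bar>" "F (x + (t, 0)) - F x = t * pd1 F (x + (z, 0))"
proof -
  have D: "((\<lambda>s. F (x + (s, 0))) has_derivative (\<lambda>h. h * pd1 F (x + (s, 0)))) (at s within S)" for s S
    using has_vector_derivative_pd1[OF d, of x s] unfolding has_vector_derivative_def
    by (auto intro: has_derivative_at_withinI)
  show ?thesis
  proof (cases "t \<ge> 0")
    case True
    then obtain z where "z \<in> {0..t}" "F (x + (t, 0)) - F (x + (0, 0)) = (t - 0) * pd1 F (x + (z, 0))"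
      using mvt_very_simple[OF True D] by blast
    then show ?thesis using that[of z] by (auto simp flip: zero_prod_def)
  next
    case False
    then obtain z where "z \<in> {t..0}" "F (x + (0, 0)) - F (x + (t, 0)) = (0 - t) * pd1 F (x + (z, 0))"
      using mvt_very_simple[of t 0, OF _ D] by force
    then show ?thesis using that[of z] False by (auto simp flip: zero_prod_def simp: algebra_simps)
  qed
qed

lemma difference_quotient_pd1_uniform:
  fixes F :: "real \<times> real \<Rightarrow> real"
  assumes F: "C1_on UNIV F" and K: "compact K" "\<And>x. x \<notin> K \<Longrightarrow> F x = 0" and e: "e > 0"
  obtains d where "d > 0"
    "\<And>t x. t \<noteq> 0 \<Longrightarrow> \<bar>t\<bar> < d \<Longrightarrow> \<bar>(F (x + (t, 0)) - F x) / t - pd1 F x\<bar> < e"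
proof -
  have d: "\<And>x. F differentiable (at x)" and c: "continuous_on UNIV (pd1 F)"
    using F unfolding C1_on_def by blast+
  have "uniformly_continuous_on UNIV (pd1 F)"
    using uniformly_continuous_on_vanishing_outside[OF c K(1) pd_vanishing_outside(1)[OF K]] .
  then obtain d where d0: "d > 0" and dF: "\<And>x y. dist y x < d \<Longrightarrow> dist (pd1 F y) (pd1 F x) < e"
    unfolding uniformly_continuous_on_def using e by blast
  have "\<bar>(F (x + (t, 0)) - F x) / t - pd1 F x\<bar> < e" if t: "t \<noteq> 0" "\<bar>t\<bar> < d" for t x
  proof -
    obtain z where z: "\<bar>z\<bar> \<le> \<bar>t\<bar>" "F (x + (t, 0)) - F x = t * pd1 F (x + (z, 0))"
      using mvt_pd1[OF d] .
    have "dist (x + (z, 0)) x < d" using z(1) t by (simp add: dist_norm)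
    then show ?thesis using dF z(2) t by (simp add: dist_real_def)
  qed
  with d0 show ?thesis using that by blast
qed

lemma abs_integral_diff_le:
  fixes f g h :: "'a::euclidean_space \<Rightarrow> real"
  assumes "f integrable_on S" "g integrable_on S" "(\<lambda>x. \<bar>h x\<bar>) integrable_on S"
    and "\<And>x. x \<in> S \<Longrightarrow> \<bar>f x - g x\<bar> \<le> e * \<bar>h x\<bar>"
  shows "\<bar>integral S f - integral S g\<bar> \<le> e * integral S (\<lambda>x. \<bar>h x\<bar>)"
proof -
  have "\<bar>integral S f - integral S g\<bar> = norm (integral S (\<lambda>x. f x - g x))"
    using integral_diff[OF assms(1,2)] by simp
  also have "\<dots> \<le> integral S (\<lambda>x. e * \<bar>h x\<bar>)"
    using assms by (intro integral_norm_bound_integral integrable_diff integrable_on_mult_right) auto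
  finally show ?thesis by simp
qed

lemma continuous_on_compose_UNIV:
  "continuous_on UNIV f \<Longrightarrow> continuous_on S g \<Longrightarrow> continuous_on S (\<lambda>x. f (g x))"
  using continuous_on_compose2[of UNIV f S g] by auto

lemma C1_on_difference_quotient:
  fixes I :: "real \<times> real \<Rightarrow> real"
  assumes I: "C1_on UNIV I" and c: "c \<noteq> 0"
  shows "C1_on UNIV (\<lambda>x. (I (x + \<sigma>) - I x) / c)"
    "pd2 (\<lambda>x. (I (x + \<sigma>) - I x) / c) x = (pd2 I (x + \<sigma>) - pd2 I x) / c"
proof -
  have dI: "\<And>x. I differentiable (at x)"
    and cI: "continuous_on UNIV I" "continuous_on UNIV (pd1 I)" "continuous_on UNIV (pd2 I)"
    using I unfolding C1_on_def by blast+
  note dS = pd_shift[OF dI]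
  have d: "(\<lambda>x. (I (x + \<sigma>) - I x) / c) differentiable (at x)"
    and pd: "pd1 (\<lambda>x. (I (x + \<sigma>) - I x) / c) x = (pd1 I (x + \<sigma>) - pd1 I x) / c"
      "pd2 (\<lambda>x. (I (x + \<sigma>) - I x) / c) x = (pd2 I (x + \<sigma>) - pd2 I x) / c" for x
    using pd_divide_const[OF pd_diff(1)[OF dS(1) dI]] pd_diff[OF dS(1) dI] dS by simp_all
  then show "pd2 (\<lambda>x. (I (x + \<sigma>) - I x) / c) x = (pd2 I (x + \<sigma>) - pd2 I x) / c" by blast
  show "C1_on UNIV (\<lambda>x. (I (x + \<sigma>) - I x) / c)"
    unfolding C1_on_def pd[abs_def] using d c
    by (auto intro!: continuous_intros continuous_on_compose_UNIV[OF cI(1)]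
        continuous_on_compose_UNIV[OF cI(2)] continuous_on_compose_UNIV[OF cI(3)] cI)
qed

lemma integral_difference_quotient_by_parts:
  fixes R I :: "real \<times> real \<Rightarrow> real"
  assumes R: "C1_on UNIV R" and I: "C1_on UNIV I" and K: "compact K"
    and R0: "\<And>x. x \<notin> K \<Longrightarrow> R x = 0" and I0: "\<And>x. x \<notin> K \<Longrightarrow> I x = 0" and t: "t \<noteq> 0"
  shows "integral UNIV (\<lambda>x. (R (x + (t, 0)) - R x) / t * pd2 I x)
       = integral UNIV (\<lambda>x. pd2 R x * ((I (x + (-t, 0)) - I x) / (-t)))"
proof -
  define G where "G = (\<lambda>x. (I (x + (-t, 0)) - I x) / (-t))"
  have CG: "C1_on UNIV G" and G2: "\<And>x. pd2 G x = (pd2 I (x + (-t, 0)) - pd2 I x) / (-t)"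
    unfolding G_def using C1_on_difference_quotient[OF I, of "-t"] t by auto
  define K' where "K' = K \<union> (\<lambda>x. (t, 0) + x) ` K"
  have K': "compact K'"
    unfolding K'_def using K by (auto intro!: compact_Un compact_continuous_image continuous_intros)
  have G0: "G x = 0" if "x \<notin> K'" for x
  proof -
    have "x + (-t, 0) \<notin> K"
    proof
      assume "x + (-t, 0) \<in> K"
      then have "(t, 0) + (x + (-t, 0)) \<in> K'" unfolding K'_def by blast
      then show False using that by (cases x) simp
    qed
    then show ?thesis using that I0 unfolding G_def K'_def by simp
  qed
  have cR: "continuous_on UNIV R" and cI2: "continuous_on UNIV (pd2 I)"
    using R I unfolding C1_on_def by blast+
  have I20: "pd2 I x = 0" if "x \<notin> K" for x
    using pd_vanishing_outside(2)[OF K I0 that] .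
  note int = integrable_on_UNIV_vanishing_outside[OF open_UNIV K subset_UNIV]
  have ia: "(\<lambda>x. R ((t, 0) + x) * pd2 I x) integrable_on UNIV"
    and ib: "(\<lambda>x. R x * pd2 I x) integrable_on UNIV"
    and ic: "(\<lambda>x. R x * pd2 I (x + (-t, 0))) integrable_on UNIV"
    by (rule int; auto intro!: continuous_intros continuous_on_compose_UNIV[OF cR]
        continuous_on_compose_UNIV[OF cI2] cR cI2 simp: I20 R0)+
  have shift: "integral UNIV (\<lambda>x. R ((t, 0) + x) * pd2 I x) = integral UNIV (\<lambda>x. R x * pd2 I (x + (-t, 0)))"
  proof -
    have "integral UNIV (\<lambda>x. (\<lambda>y. R y * pd2 I (y + (-t, 0))) ((t, 0) + x))
        = integral UNIV (\<lambda>y. R y * pd2 I (y + (-t, 0)))"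
      by (rule integral_UNIV_translate[OF _ K])
        (auto intro!: continuous_intros continuous_on_compose_UNIV[OF cI2] cR simp: R0)
    moreover have "(\<lambda>x. (\<lambda>y. R y * pd2 I (y + (-t, 0))) ((t, 0) + x)) = (\<lambda>x. R ((t, 0) + x) * pd2 I x)"
      by (auto simp: algebra_simps)
    ultimately show ?thesis by simp
  qed
  have "(\<lambda>x. (R (x + (t, 0)) - R x) / t * pd2 I x) = (\<lambda>x. (R ((t, 0) + x) * pd2 I x - R x * pd2 I x) / t)"
    by (simp add: fun_eq_iff algebra_simps diff_divide_distrib)
  moreover have "(\<lambda>x. R x * pd2 G x) = (\<lambda>x. (R x * pd2 I (x + (-t, 0)) - R x * pd2 I x) / (-t))"
    by (simp add: fun_eq_iff G2 algebra_simps diff_divide_distrib)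
  ultimately have "integral UNIV (\<lambda>x. (R (x + (t, 0)) - R x) / t * pd2 I x)
      = - integral UNIV (\<lambda>x. R x * pd2 G x)"
    using integral_diff[OF ia ib] integral_diff[OF ic ib] shift by simp
  also have "\<dots> = integral UNIV (\<lambda>x. G x * pd2 R x)"
    using integration_by_parts_pd(2)[OF open_UNIV K' subset_UNIV G0 CG R] by simp
  finally show ?thesis unfolding G_def by (simp add: mult.commute)
qed

text \<open>For \<open>C\<^sup>1\<close> functions this cannot be obtained by integrating by parts twice, which would
  need \<open>\<partial>\<^sub>1\<partial>\<^sub>2\<close>. Instead \<open>\<partial>\<^sub>1R\<close> is approximated uniformly by difference quotients, which a
  translation moves onto \<open>I\<close> and integration by parts then moves across \<open>\<partial>\<^sub>2\<close>.\<close>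

lemma integral_pd1_pd2_symmetric:
  fixes R I :: "real \<times> real \<Rightarrow> real"
  assumes R: "C1_on UNIV R" and I: "C1_on UNIV I" and K: "compact K"
    and R0: "\<And>x. x \<notin> K \<Longrightarrow> R x = 0" and I0: "\<And>x. x \<notin> K \<Longrightarrow> I x = 0"
  shows "integral UNIV (\<lambda>x. pd1 R x * pd2 I x) = integral UNIV (\<lambda>x. pd2 R x * pd1 I x)"
proof -
  have cR: "continuous_on UNIV R" "continuous_on UNIV (pd1 R)" "continuous_on UNIV (pd2 R)"
    and cI: "continuous_on UNIV I" "continuous_on UNIV (pd1 I)" "continuous_on UNIV (pd2 I)"
    using R I unfolding C1_on_def by blast+
  have R'0: "pd1 R x = 0" "pd2 R x = 0" and I'0: "pd1 I x = 0" "pd2 I x = 0" if "x \<notin> K" for x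
    using pd_vanishing_outside[OF K R0 that] pd_vanishing_outside[OF K I0 that] by simp_all
  define J1 where "J1 = integral UNIV (\<lambda>x. pd1 R x * pd2 I x)"
  define J2 where "J2 = integral UNIV (\<lambda>x. pd2 R x * pd1 I x)"
  define A where "A = integral UNIV (\<lambda>x. \<bar>pd2 I x\<bar>)"
  define B where "B = integral UNIV (\<lambda>x. \<bar>pd2 R x\<bar>)"
  note int = integrable_on_UNIV_vanishing_outside[OF open_UNIV K subset_UNIV]
  have iA: "(\<lambda>x. \<bar>pd2 I x\<bar>) integrable_on UNIV" and iB: "(\<lambda>x. \<bar>pd2 R x\<bar>) integrable_on UNIV"
    and iJ1: "(\<lambda>x. pd1 R x * pd2 I x) integrable_on UNIV"
    and iJ2: "(\<lambda>x. pd2 R x * pd1 I x) integrable_on UNIV"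
    by (rule int; auto intro!: continuous_intros cR cI simp: R'0 I'0)+
  have A0: "A \<ge> 0" and B0: "B \<ge> 0"
    unfolding A_def B_def by (auto intro!: integral_nonneg iA iB)
  have bound: "\<bar>J1 - J2\<bar> \<le> e * (A + B)" if e: "e > 0" for e
  proof -
    obtain d1 where d1: "d1 > 0"
      "\<And>t x. t \<noteq> 0 \<Longrightarrow> \<bar>t\<bar> < d1 \<Longrightarrow> \<bar>(R (x + (t, 0)) - R x) / t - pd1 R x\<bar> < e"
      using difference_quotient_pd1_uniform[OF R K R0 e] by blast
    obtain d2 where d2: "d2 > 0"
      "\<And>t x. t \<noteq> 0 \<Longrightarrow> \<bar>t\<bar> < d2 \<Longrightarrow> \<bar>(I (x + (t, 0)) - I x) / t - pd1 I x\<bar> < e"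
      using difference_quotient_pd1_uniform[OF I K I0 e] by blast
    define t where "t = min d1 d2 / 2"
    have t: "t \<noteq> 0" "\<bar>t\<bar> < d1" "-t \<noteq> 0" "\<bar>-t\<bar> < d2" unfolding t_def using d1 d2 by auto
    define Q1 where "Q1 = (\<lambda>x. (R (x + (t, 0)) - R x) / t * pd2 I x)"
    define Q2 where "Q2 = (\<lambda>x. pd2 R x * ((I (x + (-t, 0)) - I x) / (-t)))"
    have iQ1: "Q1 integrable_on UNIV" and iQ2: "Q2 integrable_on UNIV"
      unfolding Q1_def Q2_def
      by (rule int; auto intro!: continuous_intros continuous_on_compose_UNIV[OF cR(1)]
          continuous_on_compose_UNIV[OF cI(1)] cR cI simp: R'0 I'0 t(1))+
    have "integral UNIV Q1 = integral UNIV Q2"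
      unfolding Q1_def Q2_def by (rule integral_difference_quotient_by_parts[OF R I K R0 I0 t(1)])
    moreover have "\<bar>J1 - integral UNIV Q1\<bar> \<le> e * A"
      unfolding J1_def A_def
    proof (rule abs_integral_diff_le[OF iJ1 iQ1 iA])
      fix x
      have "\<bar>pd1 R x * pd2 I x - Q1 x\<bar> = \<bar>pd1 R x - (R (x + (t, 0)) - R x) / t\<bar> * \<bar>pd2 I x\<bar>"
        unfolding Q1_def by (simp add: abs_mult[symmetric] algebra_simps)
      also have "\<dots> \<le> e * \<bar>pd2 I x\<bar>"
        using d1(2)[OF t(1,2), of x] by (intro mult_right_mono) (auto simp: abs_minus_commute)
      finally show "\<bar>pd1 R x * pd2 I x - Q1 x\<bar> \<le> e * \<bar>pd2 I x\<bar>" .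
    qed
    moreover have "\<bar>integral UNIV Q2 - J2\<bar> \<le> e * B"
      unfolding J2_def B_def
    proof (rule abs_integral_diff_le[OF iQ2 iJ2 iB])
      fix x
      have "\<bar>Q2 x - pd2 R x * pd1 I x\<bar> = \<bar>(I (x + (-t, 0)) - I x) / (-t) - pd1 I x\<bar> * \<bar>pd2 R x\<bar>"
        unfolding Q2_def by (simp add: abs_mult[symmetric] algebra_simps)
      also have "\<dots> \<le> e * \<bar>pd2 R x\<bar>"
        using d2(2)[OF t(3,4), of x] by (intro mult_right_mono) auto
      finally show "\<bar>Q2 x - pd2 R x * pd1 I x\<bar> \<le> e * \<bar>pd2 R x\<bar>" .
    qed
    ultimately show ?thesis by (simp add: distrib_left)
  qed
  have "\<bar>J1 - J2\<bar> \<le> e" if "e > 0" for e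
  proof -
    have "\<bar>J1 - J2\<bar> \<le> e / (A + B + 1) * (A + B)"
      using bound[of "e / (A + B + 1)"] that A0 B0 by simp
    also have "\<dots> \<le> e" using that A0 B0 by (simp add: field_simps)
    finally show ?thesis .
  qed
  then show ?thesis using dense_eq0_I[of "J1 - J2"] unfolding J1_def J2_def by simp
qed

section \<open>The Pauli identity and a magnetic Poincare inequality\<close>

definition Pi1 :: "real \<Rightarrow> (real \<times> real \<Rightarrow> real) \<Rightarrow> (real \<times> real \<Rightarrow> complex) \<Rightarrow> real \<times> real \<Rightarrow> complex" where
  "Pi1 h a u x = - \<i> * complex_of_real h * pd1 u x - complex_of_real (a x) * u x"

definition Pi2 :: "real \<Rightarrow> (real \<times> real \<Rightarrow> real) \<Rightarrow> (real \<times> real \<Rightarrow> complex) \<Rightarrow> real \<times> real \<Rightarrow> complex" where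
  "Pi2 h a u x = - \<i> * complex_of_real h * pd2 u x - complex_of_real (a x) * u x"

lemma cmod_Pi_sum_identity:
  fixes z z1 z2 :: complex and a1 a2 h :: real
  defines "P1 \<equiv> - \<i> * complex_of_real h * z1 - complex_of_real a1 * z"
    and "P2 \<equiv> - \<i> * complex_of_real h * z2 - complex_of_real a2 * z"
  shows "(cmod P1)\<^sup>2 + (cmod P2)\<^sup>2 = (cmod (P1 + \<i> * P2))\<^sup>2
     + 2 * h\<^sup>2 * (Re z1 * Im z2 - Re z2 * Im z1)
     - h * a2 * (2 * (Re z * Re z1 + Im z * Im z1))
     + h * a1 * (2 * (Re z * Re z2 + Im z * Im z2))"
  unfolding P1_def P2_def cmod_power2 by (simp add: power2_eq_square algebra_simps)

lemma pauli_integral_identity: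
  fixes u :: "real \<times> real \<Rightarrow> complex" and a1 a2 :: "real \<times> real \<Rightarrow> real"
  assumes V: "open V" and K: "compact K" "K \<subseteq> V" and u0: "\<And>x. x \<notin> K \<Longrightarrow> u x = 0"
    and u: "C1_on UNIV u" and a1: "C1_on V a1" and a2: "C1_on V a2"
  shows "integral UNIV (\<lambda>x. (cmod (Pi1 h a1 u x))\<^sup>2 + (cmod (Pi2 h a2 u x))\<^sup>2)
     = integral UNIV (\<lambda>x. (cmod (Pi1 h a1 u x + \<i> * Pi2 h a2 u x))\<^sup>2)
       + h * integral UNIV (\<lambda>x. (pd1 a2 x - pd2 a1 x) * (cmod (u x))\<^sup>2)"
proof -
  define R where "R = (\<lambda>x. Re (u x))"
  define I where "I = (\<lambda>x. Im (u x))"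
  define \<rho> where "\<rho> = (\<lambda>x. (cmod (u x))\<^sup>2)"
  have du: "\<And>x. u differentiable (at x)"
    and cu: "continuous_on V u" "continuous_on V (pd1 u)" "continuous_on V (pd2 u)"
    using u unfolding C1_on_def by (auto intro: continuous_on_subset)
  have ca: "continuous_on V a1" "continuous_on V a2"
    using a1 a2 unfolding C1_on_def by blast+
  have u'0: "pd1 u x = 0" "pd2 u x = 0" if "x \<notin> K" for x
    using pd_vanishing_outside[OF K(1) u0 that] by simp_all
  have pdRI: "pd1 R x = Re (pd1 u x)" "pd2 R x = Re (pd2 u x)" "pd1 I x = Im (pd1 u x)" "pd2 I x = Im (pd2 u x)"
    and pd\<rho>: "pd1 \<rho> x = 2 * (R x * pd1 R x + I x * pd1 I x)" "pd2 \<rho> x = 2 * (R x * pd2 R x + I x * pd2 I x)"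
    for x unfolding R_def I_def \<rho>_def using pd_Re_Im[OF du] pd_cmod_sq[OF du] by simp_all
  have \<rho>0: "\<rho> x = 0" if "x \<notin> K" for x unfolding \<rho>_def using u0 that by simp
  have C\<rho>: "C1_on UNIV \<rho>" unfolding \<rho>_def by (rule C1_on_cmod_sq[OF u])
  have jac: "integral UNIV (\<lambda>x. pd1 R x * pd2 I x) = integral UNIV (\<lambda>x. pd2 R x * pd1 I x)"
    by (rule integral_pd1_pd2_symmetric[of R I K])
      (use C1_on_Re_Im[OF u] K u0 in \<open>auto simp: R_def I_def\<close>)
  note ibp1 = integration_by_parts_pd(1,3,4)[OF V K \<rho>0 C\<rho> a2]
    and ibp2 = integration_by_parts_pd(2,5,6)[OF V K \<rho>0 C\<rho> a1]
  note int = integrable_on_UNIV_vanishing_outside[OF V K]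
  have i0: "(\<lambda>x. (cmod (Pi1 h a1 u x + \<i> * Pi2 h a2 u x))\<^sup>2) integrable_on UNIV"
    and iT: "(\<lambda>x. pd1 R x * pd2 I x) integrable_on UNIV" "(\<lambda>x. pd2 R x * pd1 I x) integrable_on UNIV"
    unfolding pdRI by (rule int; auto simp: Pi1_def Pi2_def u0 u'0 intro!: continuous_intros ca cu)+
  have pw: "(cmod (Pi1 h a1 u x))\<^sup>2 + (cmod (Pi2 h a2 u x))\<^sup>2 =
      (cmod (Pi1 h a1 u x + \<i> * Pi2 h a2 u x))\<^sup>2
      + (2 * h\<^sup>2) * (pd1 R x * pd2 I x) - (2 * h\<^sup>2) * (pd2 R x * pd1 I x)
      - h * (a2 x * pd1 \<rho> x) + h * (a1 x * pd2 \<rho> x)" for x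
    unfolding Pi1_def Pi2_def pd\<rho> pdRI using cmod_Pi_sum_identity[of h "pd1 u x" "a1 x" "u x" "pd2 u x" "a2 x"]
    unfolding R_def I_def by (simp add: algebra_simps)
  have "integral UNIV (\<lambda>x. (cmod (Pi1 h a1 u x))\<^sup>2 + (cmod (Pi2 h a2 u x))\<^sup>2)
      = integral UNIV (\<lambda>x. (cmod (Pi1 h a1 u x + \<i> * Pi2 h a2 u x))\<^sup>2)
        + (2 * h\<^sup>2) * integral UNIV (\<lambda>x. pd1 R x * pd2 I x)
        - (2 * h\<^sup>2) * integral UNIV (\<lambda>x. pd2 R x * pd1 I x)
        - h * integral UNIV (\<lambda>x. a2 x * pd1 \<rho> x) + h * integral UNIV (\<lambda>x. a1 x * pd2 \<rho> x)"
    unfolding pw using i0 iT ibp1(2) ibp2(2)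
    by (simp add: integral_add integral_diff integrable_add integrable_diff integrable_on_mult_right)
  also have "\<dots> = integral UNIV (\<lambda>x. (cmod (Pi1 h a1 u x + \<i> * Pi2 h a2 u x))\<^sup>2)
      + h * (integral UNIV (\<lambda>x. \<rho> x * pd1 a2 x) - integral UNIV (\<lambda>x. \<rho> x * pd2 a1 x))"
    using jac ibp1(1) ibp2(1) by (simp add: algebra_simps)
  also have "integral UNIV (\<lambda>x. \<rho> x * pd1 a2 x) - integral UNIV (\<lambda>x. \<rho> x * pd2 a1 x)
      = integral UNIV (\<lambda>x. (pd1 a2 x - pd2 a1 x) * (cmod (u x))\<^sup>2)"
    using integral_diff[OF ibp1(3) ibp2(3)] by (simp add: \<rho>_def algebra_simps)
  finally show ?thesis .
qed

lemma abs_pd1_cmod_sq_le: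
  fixes u :: "real \<times> real \<Rightarrow> complex"
  assumes u: "u differentiable (at x)" and h: "h > 0"
  shows "h * \<bar>pd1 (\<lambda>x. (cmod (u x))\<^sup>2) x\<bar> \<le> 2 * (cmod (u x) * cmod (Pi1 h a u x))"
proof -
  define S where "S = Re (u x) * Re (pd1 u x) + Im (u x) * Im (pd1 u x)"
  have "h * S = - Im (cnj (u x) * Pi1 h a u x)"
    unfolding Pi1_def S_def by (simp add: algebra_simps)
  then have "h * \<bar>S\<bar> \<le> cmod (u x) * cmod (Pi1 h a u x)"
    using abs_Im_le_cmod[of "cnj (u x) * Pi1 h a u x"] h by (simp add: abs_mult norm_mult)
  moreover have "pd1 (\<lambda>x. (cmod (u x))\<^sup>2) x = 2 * S"
    using pd_cmod_sq(2)[OF u] unfolding S_def .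
  ultimately show ?thesis by (simp add: abs_mult)
qed

text \<open>Integration by parts against \<open>x\<^sub>1\<close> gives \<open>\<integral>|w|\<^sup>2 = - \<integral> x\<^sub>1 \<partial>\<^sub>1|w|\<^sup>2\<close>, and
  \<open>h |\<partial>\<^sub>1|w|\<^sup>2| \<le> 2 |w| |\<Pi>\<^sub>1 w|\<close>; the arithmetic-geometric mean inequality then
  absorbs half of \<open>\<integral>|w|\<^sup>2\<close> into the left-hand side.\<close>

lemma magnetic_poincare_pd1:
  fixes w :: "real \<times> real \<Rightarrow> complex" and a :: "real \<times> real \<Rightarrow> real"
  assumes V: "open V" and K: "compact K" "K \<subseteq> V" and w0: "\<And>x. x \<notin> K \<Longrightarrow> w x = 0"
    and w: "C1_on UNIV w" and a: "continuous_on V a" and L: "\<And>x. x \<in> V \<Longrightarrow> \<bar>fst x\<bar> \<le> L"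
    and h: "h > 0"
  shows "integral UNIV (\<lambda>x. (cmod (w x))\<^sup>2) \<le> (4 * L\<^sup>2 / h\<^sup>2) * integral UNIV (\<lambda>x. (cmod (Pi1 h a w x))\<^sup>2)"
proof -
  define \<rho> where "\<rho> = (\<lambda>x. (cmod (w x))\<^sup>2)"
  define c where "c = 2 * L\<^sup>2 / h\<^sup>2"
  have dw: "\<And>x. w differentiable (at x)"
    and cw: "continuous_on V w" "continuous_on V (pd1 w)"
    using w unfolding C1_on_def by (auto intro: continuous_on_subset)
  have \<rho>0: "\<rho> x = 0" if "x \<notin> K" for x unfolding \<rho>_def using w0 that by simp
  have w'0: "pd1 w x = 0" if "x \<notin> K" for x using pd_vanishing_outside[OF K(1) w0 that] by simp
  note ibp = integration_by_parts_pd(1,3)[OF V K \<rho>0 C1_on_cmod_sq[OF w, folded \<rho>_def] C1_on_fst(1)]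
  have i\<rho>: "\<rho> integrable_on UNIV" and iP: "(\<lambda>x. (cmod (Pi1 h a w x))\<^sup>2) integrable_on UNIV"
    unfolding \<rho>_def by (rule integrable_on_UNIV_vanishing_outside[OF V K];
        auto simp: Pi1_def w0 w'0 intro!: continuous_intros a cw)+
  have pw: "- (fst x * pd1 \<rho> x) \<le> \<rho> x / 2 + c * (cmod (Pi1 h a w x))\<^sup>2" for x
  proof (cases "x \<in> K")
    case False
    then show ?thesis using pd_vanishing_outside(1)[OF K(1) \<rho>0 False] \<rho>0 unfolding c_def by simp
  next
    case True
    define b where "b = L * cmod (Pi1 h a w x) / h"
    have Lx: "\<bar>fst x\<bar> \<le> L" using L True K(2) by blast
    then have "- (fst x * pd1 \<rho> x) \<le> L * \<bar>pd1 \<rho> x\<bar>"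
      by (metis abs_ge_minus_self abs_ge_zero abs_mult mult_right_mono order_trans)
    also have "\<dots> \<le> 2 * cmod (w x) * b"
    proof -
      have "L * (h * \<bar>pd1 \<rho> x\<bar>) \<le> L * (2 * (cmod (w x) * cmod (Pi1 h a w x)))"
        using mult_left_mono[OF abs_pd1_cmod_sq_le[OF dw h, of x a]] Lx unfolding \<rho>_def by simp
      then show ?thesis unfolding b_def using h by (simp add: field_simps)
    qed
    also have "\<dots> \<le> (cmod (w x))\<^sup>2 / 2 + 2 * b\<^sup>2"
      using zero_le_power2[of "cmod (w x) - 2 * b"] by (simp add: power2_eq_square algebra_simps)
    also have "\<dots> = \<rho> x / 2 + c * (cmod (Pi1 h a w x))\<^sup>2"
      unfolding \<rho>_def b_def c_def by (simp add: power_divide power_mult_distrib)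
    finally show ?thesis .
  qed
  have "integral UNIV \<rho> = - integral UNIV (\<lambda>x. fst x * pd1 \<rho> x)"
    using ibp(1) C1_on_fst(2) by simp
  also have "\<dots> \<le> integral UNIV (\<lambda>x. \<rho> x / 2 + c * (cmod (Pi1 h a w x))\<^sup>2)"
    unfolding integral_neg[symmetric]
    by (rule integral_le) (auto intro!: integrable_neg ibp(2) integrable_add integrable_on_mult_right
        iP integrable_on_divide i\<rho> pw)
  also have "\<dots> = integral UNIV \<rho> / 2 + c * integral UNIV (\<lambda>x. (cmod (Pi1 h a w x))\<^sup>2)"
    by (simp add: integral_add integrable_on_mult_right iP integrable_on_divide i\<rho>)
  finally show ?thesis unfolding \<rho>_def c_def by simp
qed

section \<open>Maximum principle\<close>

lemma has_real_derivative_along_line: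
  fixes f :: "real \<times> real \<Rightarrow> real"
  assumes "f differentiable (at (x0 + t *\<^sub>R e))"
  shows "((\<lambda>s. f (x0 + s *\<^sub>R e)) has_real_derivative frechet_derivative f (at (x0 + t *\<^sub>R e)) e) (at t)"
proof -
  let ?D = "frechet_derivative f (at (x0 + t *\<^sub>R e))"
  have D: "(f has_derivative ?D) (at (x0 + t *\<^sub>R e))"
    using assms by (simp add: frechet_derivative_works)
  have "((\<lambda>s. x0 + s *\<^sub>R e) has_derivative (\<lambda>h. h *\<^sub>R e)) (at t)"
    by (auto intro!: derivative_eq_intros)
  from has_derivative_compose[OF this D]
  have "((\<lambda>s. f (x0 + s *\<^sub>R e)) has_derivative (\<lambda>h. h * ?D e)) (at t)"
    using linear_scale[OF has_derivative_linear[OF D]] by simp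
  then show ?thesis
    unfolding has_real_derivative_iff_has_vector_derivative has_vector_derivative_def by simp
qed

lemma second_directional_derivative_nonpos_at_max:
  fixes \<psi> :: "real \<times> real \<Rightarrow> real" and e :: "real \<times> real"
  assumes \<Omega>: "open \<Omega>" and x0: "x0 \<in> \<Omega>" and d: "\<And>y. y \<in> \<Omega> \<Longrightarrow> \<psi> differentiable (at y)"
    and dd: "(\<lambda>x. frechet_derivative \<psi> (at x) e) differentiable (at x0)"
    and max: "\<And>y. y \<in> \<Omega> \<Longrightarrow> \<psi> y \<le> \<psi> x0"
  shows "frechet_derivative (\<lambda>x. frechet_derivative \<psi> (at x) e) (at x0) e \<le> 0"
proof (rule ccontr)
  define D where "D = (\<lambda>x. frechet_derivative \<psi> (at x) e)"
  assume "\<not> frechet_derivative (\<lambda>x. frechet_derivative \<psi> (at x) e) (at x0) e \<le> 0"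
  then have pos: "frechet_derivative D (at x0) e > 0" unfolding D_def by simp
  have "frechet_derivative \<psi> (at x0) = (\<lambda>v. 0)"
    by (rule differential_zero_maxmin[OF x0 \<Omega>]) (use d[OF x0] max in \<open>auto simp: frechet_derivative_works\<close>)
  then have D0: "D x0 = 0" unfolding D_def by simp
  have "DERIV (\<lambda>s. D (x0 + s *\<^sub>R e)) 0 :> frechet_derivative D (at x0) e"
    using has_real_derivative_along_line[of D x0 0 e] dd unfolding D_def by simp
  from DERIV_pos_inc_right[OF this pos] obtain dl where dl: "dl > 0"
    "\<And>h. h > 0 \<Longrightarrow> h < dl \<Longrightarrow> D x0 < D (x0 + h *\<^sub>R e)"
    by auto
  obtain r where r: "r > 0" "ball x0 r \<subseteq> \<Omega>" using \<Omega> x0 openE by blast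
  define s where "s = min dl (r / (norm e + 1)) / 2"
  have s: "s > 0" "s < dl" unfolding s_def using dl r by (auto simp: add_nonneg_pos min_def)
  have inb: "x0 + t *\<^sub>R e \<in> \<Omega>" if "0 \<le> t" "t \<le> s" for t
  proof -
    have "t < r / (norm e + 1)" using that s unfolding s_def by linarith
    then have "t * (norm e + 1) < r" by (simp add: field_simps add_pos_nonneg)
    then have "norm (t *\<^sub>R e) < r" using that by (simp add: algebra_simps)
    then show ?thesis using r by (auto simp: dist_norm)
  qed
  have "\<exists>z\<in>{0<..<s}. \<psi> (x0 + s *\<^sub>R e) - \<psi> (x0 + 0 *\<^sub>R e) = (\<lambda>h. h * D (x0 + z *\<^sub>R e)) (s - 0)"
  proof (rule mvt_simple[OF s(1)])
    fix t assume t: "0 \<le> t" "t \<le> s"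
    have "((\<lambda>s. \<psi> (x0 + s *\<^sub>R e)) has_real_derivative D (x0 + t *\<^sub>R e)) (at t)"
      unfolding D_def by (rule has_real_derivative_along_line) (rule d[OF inb[OF t]])
    then show "((\<lambda>s. \<psi> (x0 + s *\<^sub>R e)) has_derivative (\<lambda>h. h * D (x0 + t *\<^sub>R e))) (at t within {0..s})"
      unfolding has_real_derivative_iff_has_vector_derivative has_vector_derivative_def
      by (simp add: has_derivative_at_withinI)
  qed
  then obtain z where z: "0 < z" "z < s" "\<psi> (x0 + s *\<^sub>R e) - \<psi> x0 = s * D (x0 + z *\<^sub>R e)" by auto
  have "D (x0 + z *\<^sub>R e) > 0" using dl(2)[of z] z s D0 by simp
  then have "s * D (x0 + z *\<^sub>R e) > 0" using s by simp
  then have "\<psi> (x0 + s *\<^sub>R e) > \<psi> x0" using z(3) by linarith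
  moreover have "\<psi> (x0 + s *\<^sub>R e) \<le> \<psi> x0" using max inb s by simp
  ultimately show False by simp
qed

lemma max_principle_strict_subharmonic:
  fixes \<psi> :: "real \<times> real \<Rightarrow> real"
  assumes \<Omega>: "open \<Omega>" "bounded \<Omega>" and c: "continuous_on (closure \<Omega>) \<psi>"
    and \<psi>: "Ck_on 2 \<Omega> \<psi>" and lap: "\<And>x. x \<in> \<Omega> \<Longrightarrow> pd1 (pd1 \<psi>) x + pd2 (pd2 \<psi>) x > 0"
    and bd: "\<And>x. x \<in> frontier \<Omega> \<Longrightarrow> \<psi> x = 0" and x: "x \<in> \<Omega>"
  shows "\<psi> x \<le> 0"
proof -
  have "compact (closure \<Omega>)" using \<Omega>(2) compact_closure by blast
  moreover have "closure \<Omega> \<noteq> {}" using x closure_subset by blast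
  ultimately obtain x0 where x0: "x0 \<in> closure \<Omega>" "\<And>y. y \<in> closure \<Omega> \<Longrightarrow> \<psi> y \<le> \<psi> x0"
    using continuous_attains_sup[OF _ _ c] by blast
  show ?thesis
  proof (cases "x0 \<in> frontier \<Omega>")
    case True
    then have "\<psi> x0 = 0" by (rule bd)
    moreover have "x \<in> closure \<Omega>" using x closure_subset by blast
    ultimately show ?thesis using x0(2)[of x] by simp
  next
    case False
    then have "x0 \<in> interior \<Omega>" using x0(1) unfolding frontier_def by blast
    then have x0\<Omega>: "x0 \<in> \<Omega>" using interior_open[OF \<Omega>(1)] by simp
    have C: "C1_on \<Omega> \<psi>" "C1_on \<Omega> (pd1 \<psi>)" "C1_on \<Omega> (pd2 \<psi>)"
      using Ck_on_2_imp_C1_on[OF \<psi>] .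
    have d: "\<And>y. y \<in> \<Omega> \<Longrightarrow> \<psi> differentiable (at y)" using C(1) unfolding C1_on_def by blast
    have dd: "(\<lambda>x. frechet_derivative \<psi> (at x) (1, 0)) differentiable (at x0)"
      "(\<lambda>x. frechet_derivative \<psi> (at x) (0, 1)) differentiable (at x0)"
      using C(2,3) x0\<Omega> unfolding C1_on_def pd1_def pd2_def by blast+
    have max: "\<And>y. y \<in> \<Omega> \<Longrightarrow> \<psi> y \<le> \<psi> x0" using x0(2) closure_subset by blast
    have "pd1 (pd1 \<psi>) x0 \<le> 0"
      using second_directional_derivative_nonpos_at_max[OF \<Omega>(1) x0\<Omega> d dd(1) max]
      unfolding pd1_def .
    moreover have "pd2 (pd2 \<psi>) x0 \<le> 0"
      using second_directional_derivative_nonpos_at_max[OF \<Omega>(1) x0\<Omega> d dd(2) max]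
      unfolding pd2_def .
    ultimately show ?thesis using lap[OF x0\<Omega>] by simp
  qed
qed

lemma has_real_derivative_max0_sq: "((\<lambda>s::real. (max 0 s)\<^sup>2) has_real_derivative 2 * max 0 s) (at s)"
proof (cases "s > 0")
  case True
  have "((\<lambda>s::real. s\<^sup>2) has_real_derivative 2 * s) (at s)" by (auto intro!: derivative_eq_intros)
  then have "((\<lambda>s::real. (max 0 s)\<^sup>2) has_real_derivative 2 * s) (at s)"
    by (rule has_field_derivative_transform_within_open[of _ _ _ "{0<..}"]) (use True in auto)
  then show ?thesis using True by simp
next
  case False
  show ?thesis
  proof (cases "s < 0")
    case True
    have "((\<lambda>s::real. 0) has_real_derivative 0) (at s)" by simp
    then have "((\<lambda>s::real. (max 0 s)\<^sup>2) has_real_derivative 0) (at s)"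
      by (rule has_field_derivative_transform_within_open[of _ _ _ "{..<0}"]) (use True in auto)
    then show ?thesis using True by simp
  next
    case False
    then have s0: "s = 0" using \<open>\<not> s > 0\<close> by simp
    have "((\<lambda>h::real. ((max 0 (0 + h))\<^sup>2 - (max 0 0)\<^sup>2) / h) \<longlongrightarrow> 0) (at 0)"
    proof (rule Lim_null_comparison)
      show "\<forall>\<^sub>F h in at 0. norm (((max 0 (0 + h))\<^sup>2 - (max 0 0)\<^sup>2) / h) \<le> \<bar>h\<bar>"
        by (rule always_eventually) (auto simp: power2_eq_square abs_mult max_def)
      show "((\<lambda>h::real. \<bar>h\<bar>) \<longlongrightarrow> 0) (at 0)" by (auto intro!: tendsto_eq_intros)
    qed
    then show ?thesis unfolding s0 DERIV_def by simp
  qed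
qed

lemma C1_on_bump:
  fixes a b r :: real
  defines "q \<equiv> \<lambda>x::real \<times> real. r\<^sup>2 - ((fst x - a)\<^sup>2 + (snd x - b)\<^sup>2)"
  shows "C1_on UNIV (\<lambda>x. complex_of_real ((max 0 (q x))\<^sup>2))"
proof -
  define u where "u = (\<lambda>x. complex_of_real ((max 0 (q x))\<^sup>2))"
  have Dq: "(q has_derivative (\<lambda>v. - (2 * (fst x - a) * fst v + 2 * (snd x - b) * snd v))) (at x)" for x
    unfolding q_def by (auto intro!: derivative_eq_intros simp: algebra_simps)
  have "((\<lambda>s. (max 0 s)\<^sup>2) has_derivative (\<lambda>h. h * (2 * max 0 (q x)))) (at (q x))" for x
    using has_real_derivative_max0_sq[of "q x"]
    unfolding has_real_derivative_iff_has_vector_derivative has_vector_derivative_def by simp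
  from has_derivative_compose[OF Dq this]
  have Du: "(u has_derivative (\<lambda>v. complex_of_real
      ((- (2 * (fst x - a) * fst v + 2 * (snd x - b) * snd v)) * (2 * max 0 (q x))))) (at x)" for x
    unfolding u_def by (rule has_derivative_of_real)
  have "pd1 u = (\<lambda>x. complex_of_real ((- (2 * (fst x - a))) * (2 * max 0 (q x))))"
    "pd2 u = (\<lambda>x. complex_of_real ((- (2 * (snd x - b))) * (2 * max 0 (q x))))"
    using pd1_eq_derivative[OF Du] pd2_eq_derivative[OF Du] by (auto simp: fun_eq_iff)
  then show ?thesis
    unfolding u_def[symmetric] C1_on_def using Du
    by (auto intro!: continuous_intros differentiableI simp: u_def q_def)
qed

lemma test_fun_exists:
  assumes \<Omega>: "open \<Omega>" "\<Omega> \<noteq> {}"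
  shows "\<exists>u. test_fun \<Omega> u \<and> (\<exists>x. u x \<noteq> 0)"
proof -
  obtain a b where ab: "(a, b) \<in> \<Omega>" using \<Omega>(2) by auto
  obtain r where r: "r > 0" "cball (a, b) r \<subseteq> \<Omega>"
    using open_contains_cball[THEN iffD1, OF \<Omega>(1)] ab by blast
  define q where "q = (\<lambda>x::real \<times> real. r\<^sup>2 - ((fst x - a)\<^sup>2 + (snd x - b)\<^sup>2))"
  define u where "u = (\<lambda>x. complex_of_real ((max 0 (q x))\<^sup>2))"
  have sub: "{x. u x \<noteq> 0} \<subseteq> cball (a, b) r"
  proof
    fix x assume "x \<in> {x. u x \<noteq> 0}"
    then have "(fst x - a)\<^sup>2 + (snd x - b)\<^sup>2 \<le> r\<^sup>2"
      unfolding u_def q_def by (auto simp: max_def split: if_splits)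
    then have "sqrt ((fst x - a)\<^sup>2 + (snd x - b)\<^sup>2) \<le> r"
      using real_sqrt_le_mono r(1) by fastforce
    then show "x \<in> cball (a, b) r"
      by (cases x) (simp add: dist_Pair_Pair dist_real_def power2_commute)
  qed
  have "closure {x. u x \<noteq> 0} \<subseteq> cball (a, b) r"
    by (rule closure_minimal[OF sub closed_cball])
  moreover have "compact (closure {x. u x \<noteq> 0})"
    using bounded_subset[OF bounded_cball sub] compact_closure by blast
  moreover have "Ck_on 1 UNIV u"
    unfolding Ck_on_1_iff u_def q_def by (rule C1_on_bump)
  moreover have "u (a, b) \<noteq> 0" unfolding u_def q_def using r(1) by simp
  ultimately show ?thesis unfolding test_fun_def using r(2) by blast
qed

section \<open>Lower bound for the ground state energy\<close>

lemma C1_on_exp_weight: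
  fixes u :: "real \<times> real \<Rightarrow> complex" and \<psi> :: "real \<times> real \<Rightarrow> real"
  assumes \<Omega>: "open \<Omega>" and K: "compact K" "K \<subseteq> \<Omega>" and u0: "\<And>x. x \<notin> K \<Longrightarrow> u x = 0"
    and u: "C1_on UNIV u" and \<psi>: "C1_on \<Omega> \<psi>" and h: "h \<noteq> 0"
  defines "w \<equiv> \<lambda>x. complex_of_real (exp (\<psi> x / h)) * u x"
  shows "C1_on UNIV w"
    "\<And>x. x \<in> \<Omega> \<Longrightarrow> pd1 w x = complex_of_real (exp (\<psi> x / h)) * (pd1 u x + complex_of_real (pd1 \<psi> x / h) * u x)"
    "\<And>x. x \<in> \<Omega> \<Longrightarrow> pd2 w x = complex_of_real (exp (\<psi> x / h)) * (pd2 u x + complex_of_real (pd2 \<psi> x / h) * u x)"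
proof -
  have du: "\<And>x. u differentiable (at x)"
    and cu: "continuous_on \<Omega> u" "continuous_on \<Omega> (pd1 u)" "continuous_on \<Omega> (pd2 u)"
    using u unfolding C1_on_def by (auto intro: continuous_on_subset)
  have d\<psi>: "\<And>x. x \<in> \<Omega> \<Longrightarrow> \<psi> differentiable (at x)"
    and c\<psi>: "continuous_on \<Omega> \<psi>" "continuous_on \<Omega> (pd1 \<psi>)" "continuous_on \<Omega> (pd2 \<psi>)"
    using \<psi> unfolding C1_on_def by blast+
  have w0: "w x = 0" if "x \<notin> K" for x unfolding w_def using u0 that by simp
  have D: "(w has_derivative (\<lambda>v. complex_of_real (exp (\<psi> x / h)) * (fst v *\<^sub>R pd1 u x + snd v *\<^sub>R pd2 u x)
      + complex_of_real (exp (\<psi> x / h) * ((fst v *\<^sub>R pd1 \<psi> x + snd v *\<^sub>R pd2 \<psi> x) / h)) * u x)) (at x)"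
    if x: "x \<in> \<Omega>" for x
  proof -
    have "((\<lambda>x. exp (\<psi> x / h)) has_derivative
        (\<lambda>v. exp (\<psi> x / h) * ((fst v *\<^sub>R pd1 \<psi> x + snd v *\<^sub>R pd2 \<psi> x) / h))) (at x)"
      using has_derivative_pd[OF d\<psi>[OF x]] h by (auto intro!: derivative_eq_intros)
    from has_derivative_mult[OF has_derivative_of_real[OF this] has_derivative_pd[OF du[of x]]]
    show ?thesis unfolding w_def by (simp add: algebra_simps)
  qed
  show pd: "pd1 w x = complex_of_real (exp (\<psi> x / h)) * (pd1 u x + complex_of_real (pd1 \<psi> x / h) * u x)"
    "pd2 w x = complex_of_real (exp (\<psi> x / h)) * (pd2 u x + complex_of_real (pd2 \<psi> x / h) * u x)" if "x \<in> \<Omega>" for x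
    using pd1_eq_derivative[OF D[OF that]] pd2_eq_derivative[OF D[OF that]] by (simp_all add: algebra_simps)
  have dw: "w differentiable (at x)" for x
  proof (cases "x \<in> \<Omega>")
    case True then show ?thesis by (rule differentiableI[OF D])
  next
    case False
    then have "x \<notin> K" using K(2) by blast
    then show ?thesis using pd_vanishing_outside(3)[of K w x] K(1) w0 by blast
  qed
  have w'0: "pd1 w x = 0" "pd2 w x = 0" if "x \<notin> K" for x
    using pd_vanishing_outside[OF K(1) w0 that] by simp_all
  note cont = continuous_on_UNIV_vanishing_outside[OF \<Omega> K]
  have "continuous_on UNIV w"
    by (rule cont) (auto simp: w_def u0 h intro!: continuous_intros c\<psi> cu)
  moreover have "continuous_on UNIV (pd1 w)"
  proof (rule cont)
    have "continuous_on \<Omega> (\<lambda>x. complex_of_real (exp (\<psi> x / h)) * (pd1 u x + complex_of_real (pd1 \<psi> x / h) * u x))"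
      by (intro continuous_intros c\<psi> cu) (use h in auto)
    moreover have "continuous_on \<Omega> (pd1 w) = continuous_on \<Omega> (\<lambda>x. complex_of_real (exp (\<psi> x / h))
        * (pd1 u x + complex_of_real (pd1 \<psi> x / h) * u x))"
      by (rule continuous_on_cong) (auto simp: pd)
    ultimately show "continuous_on \<Omega> (pd1 w)" by simp
  qed (rule w'0)
  moreover have "continuous_on UNIV (pd2 w)"
  proof (rule cont)
    have "continuous_on \<Omega> (\<lambda>x. complex_of_real (exp (\<psi> x / h)) * (pd2 u x + complex_of_real (pd2 \<psi> x / h) * u x))"
      by (intro continuous_intros c\<psi> cu) (use h in auto)
    moreover have "continuous_on \<Omega> (pd2 w) = continuous_on \<Omega> (\<lambda>x. complex_of_real (exp (\<psi> x / h))
        * (pd2 u x + complex_of_real (pd2 \<psi> x / h) * u x))"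
      by (rule continuous_on_cong) (auto simp: pd)
    ultimately show "continuous_on \<Omega> (pd2 w)" by simp
  qed (rule w'0)
  ultimately show "C1_on UNIV w" unfolding C1_on_def using dw by blast
qed

lemma gauge_identity:
  fixes E h p1 p2 a1 a2 :: real and z z1 z2 :: complex
  assumes h: "h \<noteq> 0"
  shows "(- \<i> * complex_of_real h * (complex_of_real E * (z1 + complex_of_real (p1 / h) * z))
            - complex_of_real (a1 + p2) * (complex_of_real E * z))
       + \<i> * (- \<i> * complex_of_real h * (complex_of_real E * (z2 + complex_of_real (p2 / h) * z))
            - complex_of_real (a2 - p1) * (complex_of_real E * z))
     = complex_of_real E * ((- \<i> * complex_of_real h * z1 - complex_of_real a1 * z)
         + \<i> * (- \<i> * complex_of_real h * z2 - complex_of_real a2 * z))"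
proof -
  define q1 where "q1 = p1 / h"
  define q2 where "q2 = p2 / h"
  have "p1 = h * q1" "p2 = h * q2" using h unfolding q1_def q2_def by simp_all
  then show ?thesis unfolding q1_def[symmetric] q2_def[symmetric] by (simp add: algebra_simps)
qed

lemma integral_Pi_sum_exp_weight_le:
  fixes u :: "real \<times> real \<Rightarrow> complex" and A1 A2 \<psi> :: "real \<times> real \<Rightarrow> real"
  assumes \<Omega>: "open \<Omega>" and K: "compact K" "K \<subseteq> \<Omega>" and u0: "\<And>x. x \<notin> K \<Longrightarrow> u x = 0"
    and u: "C1_on UNIV u" and A1: "C1_on \<Omega> A1" and A2: "C1_on \<Omega> A2" and \<psi>: "C1_on \<Omega> \<psi>"
    and \<psi>_nonpos: "\<And>x. x \<in> \<Omega> \<Longrightarrow> \<psi> x \<le> 0" and h: "h > 0"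
  defines "w \<equiv> \<lambda>x. complex_of_real (exp (\<psi> x / h)) * u x"
  shows "integral UNIV (\<lambda>x. (cmod (Pi1 h (\<lambda>x. A1 x + pd2 \<psi> x) w x
                                    + \<i> * Pi2 h (\<lambda>x. A2 x - pd1 \<psi> x) w x))\<^sup>2)
       \<le> integral UNIV (\<lambda>x. (cmod (Pi1 h A1 u x + \<i> * Pi2 h A2 u x))\<^sup>2)"
proof (rule integral_le)
  have hne: "h \<noteq> 0" using h by simp
  note W = C1_on_exp_weight[of \<Omega> K u \<psi> h, OF \<Omega> K u0 u \<psi> hne, folded w_def]
  have w0: "w x = 0" if "x \<notin> K" for x unfolding w_def using u0 that by simp
  have u'0: "pd1 u x = 0" "pd2 u x = 0" and w'0: "pd1 w x = 0" "pd2 w x = 0" if "x \<notin> K" for x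
    using pd_vanishing_outside[OF K(1) u0 that] pd_vanishing_outside[OF K(1) w0 that] by simp_all
  have cu: "continuous_on \<Omega> u" "continuous_on \<Omega> (pd1 u)" "continuous_on \<Omega> (pd2 u)"
    and cw: "continuous_on \<Omega> w" "continuous_on \<Omega> (pd1 w)" "continuous_on \<Omega> (pd2 w)"
    using u W(1) h unfolding C1_on_def by (auto intro: continuous_on_subset)
  have cA: "continuous_on \<Omega> A1" "continuous_on \<Omega> A2"
    and c\<psi>: "continuous_on \<Omega> (pd1 \<psi>)" "continuous_on \<Omega> (pd2 \<psi>)"
    using A1 A2 \<psi> unfolding C1_on_def by blast+
  note int = integrable_on_UNIV_vanishing_outside[OF \<Omega> K]
  show "(\<lambda>x. (cmod (Pi1 h (\<lambda>x. A1 x + pd2 \<psi> x) w x + \<i> * Pi2 h (\<lambda>x. A2 x - pd1 \<psi> x) w x))\<^sup>2)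
      integrable_on UNIV" "(\<lambda>x. (cmod (Pi1 h A1 u x + \<i> * Pi2 h A2 u x))\<^sup>2) integrable_on UNIV"
    by (rule int; auto simp: Pi1_def Pi2_def w0 w'0 u0 u'0 intro!: continuous_intros cA c\<psi> cu cw)+
  fix x
  show "(cmod (Pi1 h (\<lambda>x. A1 x + pd2 \<psi> x) w x + \<i> * Pi2 h (\<lambda>x. A2 x - pd1 \<psi> x) w x))\<^sup>2
      \<le> (cmod (Pi1 h A1 u x + \<i> * Pi2 h A2 u x))\<^sup>2"
  proof (cases "x \<in> \<Omega>")
    case True
    have "Pi1 h (\<lambda>x. A1 x + pd2 \<psi> x) w x + \<i> * Pi2 h (\<lambda>x. A2 x - pd1 \<psi> x) w x
        = complex_of_real (exp (\<psi> x / h)) * (Pi1 h A1 u x + \<i> * Pi2 h A2 u x)"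
    proof -
      have pdw: "pd1 w x = complex_of_real (exp (\<psi> x / h)) * (pd1 u x + complex_of_real (pd1 \<psi> x / h) * u x)"
        "pd2 w x = complex_of_real (exp (\<psi> x / h)) * (pd2 u x + complex_of_real (pd2 \<psi> x / h) * u x)"
        using W(2,3) True by blast+
      show ?thesis unfolding Pi1_def Pi2_def pdw unfolding w_def by (rule gauge_identity[OF hne])
    qed
    moreover have "exp (\<psi> x / h) \<le> 1" using \<psi>_nonpos[OF True] h by (simp add: divide_nonpos_pos)
    ultimately show ?thesis
      by (simp add: norm_mult power_mult_distrib mult_left_le_one_le power_le_one)
  next
    case False
    then have "x \<notin> K" using K(2) by blast
    then show ?thesis by (simp add: Pi1_def Pi2_def w0 w'0)
  qed
qed

lemma integral_Pi1_le_Pi_sum_curl_free: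
  fixes w :: "real \<times> real \<Rightarrow> complex" and a1 a2 :: "real \<times> real \<Rightarrow> real"
  assumes V: "open V" and K: "compact K" "K \<subseteq> V" and w0: "\<And>x. x \<notin> K \<Longrightarrow> w x = 0"
    and w: "C1_on UNIV w" and a1: "C1_on V a1" and a2: "C1_on V a2"
    and curl_free: "\<And>x. x \<in> V \<Longrightarrow> pd1 a2 x = pd2 a1 x"
  shows "integral UNIV (\<lambda>x. (cmod (Pi1 h a1 w x))\<^sup>2)
       \<le> integral UNIV (\<lambda>x. (cmod (Pi1 h a1 w x + \<i> * Pi2 h a2 w x))\<^sup>2)"
proof -
  have w'0: "pd1 w x = 0" "pd2 w x = 0" if "x \<notin> K" for x
    using pd_vanishing_outside[OF K(1) w0 that] by simp_all
  have cw: "continuous_on V w" "continuous_on V (pd1 w)" "continuous_on V (pd2 w)"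
    and ca: "continuous_on V a1" "continuous_on V a2"
    using w a1 a2 unfolding C1_on_def by (auto intro: continuous_on_subset)
  have i: "(\<lambda>x. (cmod (Pi1 h a1 w x))\<^sup>2) integrable_on UNIV"
    "(\<lambda>x. (cmod (Pi2 h a2 w x))\<^sup>2) integrable_on UNIV"
    by (rule integrable_on_UNIV_vanishing_outside[OF V K];
        auto simp: Pi1_def Pi2_def w0 w'0 intro!: continuous_intros ca cw)+
  have "(pd1 a2 x - pd2 a1 x) * (cmod (w x))\<^sup>2 = 0" for x
  proof (cases "x \<in> V")
    case False
    then have "w x = 0" using K(2) w0 by blast
    then show ?thesis by simp
  qed (simp add: curl_free)
  then have "integral UNIV (\<lambda>x. (pd1 a2 x - pd2 a1 x) * (cmod (w x))\<^sup>2) = 0"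
    by (simp only: integral_0)
  then have "integral UNIV (\<lambda>x. (cmod (Pi1 h a1 w x + \<i> * Pi2 h a2 w x))\<^sup>2)
      = integral UNIV (\<lambda>x. (cmod (Pi1 h a1 w x))\<^sup>2 + (cmod (Pi2 h a2 w x))\<^sup>2)"
    using pauli_integral_identity[OF V K w0 w a1 a2, of h] by simp
  moreover have "integral UNIV (\<lambda>x. (cmod (Pi1 h a1 w x))\<^sup>2)
      \<le> integral UNIV (\<lambda>x. (cmod (Pi1 h a1 w x))\<^sup>2 + (cmod (Pi2 h a2 w x))\<^sup>2)"
    by (rule integral_le[OF i(1) integrable_add[OF i]]) simp
  ultimately show ?thesis by simp
qed

lemma test_funD:
  assumes "test_fun \<Omega> u"
  defines "K \<equiv> closure {x. u x \<noteq> 0}"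
  shows "compact K" "K \<subseteq> \<Omega>" "\<And>x. x \<notin> K \<Longrightarrow> u x = 0" "C1_on UNIV u"
proof -
  show "compact K" "K \<subseteq> \<Omega>" "C1_on UNIV u"
    using assms(1) unfolding test_fun_def Ck_on_1_iff K_def by blast+
  show "u x = 0" if "x \<notin> K" for x
  proof (rule ccontr)
    assume "u x \<noteq> 0"
    then have "x \<in> K" unfolding K_def by (simp add: closure_def)
    with that show False by simp
  qed
qed

lemma pauli_quotient_eq_Pi_sum:
  fixes \<Omega> :: "(real \<times> real) set" and A1 A2 B :: "real \<times> real \<Rightarrow> real" and u :: "real \<times> real \<Rightarrow> complex"
  assumes \<Omega>: "open \<Omega>" and u: "test_fun \<Omega> u" and A1: "C1_on \<Omega> A1" and A2: "C1_on \<Omega> A2"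
    and curl: "\<And>x. x \<in> \<Omega> \<Longrightarrow> pd1 A2 x - pd2 A1 x = B x"
  shows "pauli_quotient h A1 A2 B \<Omega> u
       = integral UNIV (\<lambda>x. (cmod (Pi1 h A1 u x + \<i> * Pi2 h A2 u x))\<^sup>2) / integral UNIV (\<lambda>x. (cmod (u x))\<^sup>2)"
proof -
  define K where "K = closure {x. u x \<noteq> 0}"
  note K = test_funD[OF u, folded K_def]
  have u0: "u x = 0" and u'0: "pd1 u x = 0" "pd2 u x = 0" if "x \<notin> \<Omega>" for x
  proof -
    have "x \<notin> K" using K(2) that by blast
    then show "u x = 0" "pd1 u x = 0" "pd2 u x = 0"
      using K(3) pd_vanishing_outside[of K u x] K(1) by simp_all
  qed
  have "integral \<Omega> (\<lambda>x. (cmod (Pi1 h A1 u x))\<^sup>2 + (cmod (Pi2 h A2 u x))\<^sup>2)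
      = integral UNIV (\<lambda>x. (cmod (Pi1 h A1 u x))\<^sup>2 + (cmod (Pi2 h A2 u x))\<^sup>2)"
    by (rule integral_eq_integral_UNIV) (simp add: Pi1_def Pi2_def u0 u'0)
  moreover have "integral \<Omega> (\<lambda>x. (cmod (u x))\<^sup>2) = integral UNIV (\<lambda>x. (cmod (u x))\<^sup>2)"
    by (rule integral_eq_integral_UNIV) (simp add: u0)
  moreover have "integral \<Omega> (\<lambda>x. B x * (cmod (u x))\<^sup>2)
      = integral UNIV (\<lambda>x. (pd1 A2 x - pd2 A1 x) * (cmod (u x))\<^sup>2)"
  proof -
    have "integral \<Omega> (\<lambda>x. B x * (cmod (u x))\<^sup>2) = integral \<Omega> (\<lambda>x. (pd1 A2 x - pd2 A1 x) * (cmod (u x))\<^sup>2)"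
      by (rule integral_cong) (simp add: curl)
    also have "\<dots> = integral UNIV (\<lambda>x. (pd1 A2 x - pd2 A1 x) * (cmod (u x))\<^sup>2)"
      by (rule integral_eq_integral_UNIV) (simp add: u0)
    finally show ?thesis .
  qed
  ultimately show ?thesis
    using pauli_integral_identity[OF \<Omega> K(1,2,3,4) A1 A2, of h]
    unfolding pauli_quotient_def Pi1_def Pi2_def by simp
qed

lemma pauli_quotient_lower_bound:
  fixes \<Omega> :: "(real \<times> real) set" and A1 A2 B \<psi> :: "real \<times> real \<Rightarrow> real"
    and u :: "real \<times> real \<Rightarrow> complex"
  assumes \<Omega>: "open \<Omega>" and h: "h > 0" and u: "test_fun \<Omega> u" "u x0 \<noteq> 0"
    and \<psi>: "Ck_on 2 \<Omega> \<psi>" and \<psi>_nonpos: "\<And>x. x \<in> \<Omega> \<Longrightarrow> \<psi> x \<le> 0"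
    and \<psi>_ge: "\<And>x. x \<in> \<Omega> \<Longrightarrow> m \<le> \<psi> x"
    and lap: "\<And>x. x \<in> \<Omega> \<Longrightarrow> pd1 (pd1 \<psi>) x + pd2 (pd2 \<psi>) x = B x"
    and A1: "C1_on \<Omega> A1" and A2: "C1_on \<Omega> A2" and curl: "\<And>x. x \<in> \<Omega> \<Longrightarrow> pd1 A2 x - pd2 A1 x = B x"
    and L: "\<And>x. x \<in> \<Omega> \<Longrightarrow> \<bar>fst x\<bar> \<le> L" and L0: "L > 0"
  shows "h\<^sup>2 * exp (2 * m / h) / (4 * L\<^sup>2) \<le> pauli_quotient h A1 A2 B \<Omega> u"
proof -
  define K where "K = closure {x. u x \<noteq> 0}"
  note K = test_funD[OF u(1), folded K_def]
  define Q where "Q = integral UNIV (\<lambda>x. (cmod (Pi1 h A1 u x + \<i> * Pi2 h A2 u x))\<^sup>2)"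
  define N where "N = integral UNIV (\<lambda>x. (cmod (u x))\<^sup>2)"
  define w where "w = (\<lambda>x. complex_of_real (exp (\<psi> x / h)) * u x)"
  define A1' where "A1' = (\<lambda>x. A1 x + pd2 \<psi> x)"
  define A2' where "A2' = (\<lambda>x. A2 x - pd1 \<psi> x)"
  have hne: "h \<noteq> 0" using h by simp
  have cu: "continuous_on UNIV u" using K(4) unfolding C1_on_def by blast
  have C\<psi>: "C1_on \<Omega> \<psi>" "C1_on \<Omega> (pd1 \<psi>)" "C1_on \<Omega> (pd2 \<psi>)"
    using Ck_on_2_imp_C1_on[OF \<psi>] .
  have Cw: "C1_on UNIV w"
    unfolding w_def by (rule C1_on_exp_weight(1)[OF \<Omega> K(1,2,3,4) C\<psi>(1) hne])
  have w0: "w x = 0" if "x \<notin> K" for x unfolding w_def using K(3) that by simp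
  have CA': "C1_on \<Omega> A1'" "C1_on \<Omega> A2'"
    unfolding A1'_def A2'_def by (rule C1_on_add_diff(1)[OF A1 C\<psi>(3)], rule C1_on_add_diff(2)[OF A2 C\<psi>(2)])
  have curl_free: "pd1 A2' x = pd2 A1' x" if x: "x \<in> \<Omega>" for x
  proof -
    have "A1 differentiable (at x)" "A2 differentiable (at x)"
      "pd1 \<psi> differentiable (at x)" "pd2 \<psi> differentiable (at x)"
      using A1 A2 C\<psi>(2,3) x unfolding C1_on_def by blast+
    then show ?thesis using curl[OF x] lap[OF x] unfolding A1'_def A2'_def by (simp add: pd_add pd_diff)
  qed
  have N0: "N > 0" unfolding N_def
    by (rule integral_UNIV_pos[OF _ _ K(1)]) (use K(3) u(2) in \<open>auto intro!: continuous_intros cu\<close>)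
  have "exp (2 * m / h) * N = integral UNIV (\<lambda>x. exp (2 * m / h) * (cmod (u x))\<^sup>2)"
    unfolding N_def by simp
  also have "\<dots> \<le> integral UNIV (\<lambda>x. (cmod (w x))\<^sup>2)"
  proof (rule integral_le)
    have cw: "continuous_on UNIV w" using Cw unfolding C1_on_def by blast
    show "(\<lambda>x. exp (2 * m / h) * (cmod (u x))\<^sup>2) integrable_on UNIV" "(\<lambda>x. (cmod (w x))\<^sup>2) integrable_on UNIV"
      by (rule integrable_on_UNIV_vanishing_outside[OF open_UNIV K(1) subset_UNIV];
          auto intro!: continuous_intros cu cw simp: K(3) w0)+
    fix x
    show "exp (2 * m / h) * (cmod (u x))\<^sup>2 \<le> (cmod (w x))\<^sup>2"
    proof (cases "x \<in> \<Omega>")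
      case True
      have "2 * m / h \<le> 2 * \<psi> x / h" using \<psi>_ge[OF True] h by (simp add: divide_right_mono)
      then have "exp (2 * m / h) \<le> (exp (\<psi> x / h))\<^sup>2" by (simp add: power2_eq_square flip: exp_add)
      then show ?thesis unfolding w_def by (simp add: norm_mult power_mult_distrib mult_right_mono)
    next
      case False
      then have "x \<notin> K" using K(2) by blast
      then show ?thesis by (simp add: K(3))
    qed
  qed
  also have "\<dots> \<le> (4 * L\<^sup>2 / h\<^sup>2) * integral UNIV (\<lambda>x. (cmod (Pi1 h A1' w x))\<^sup>2)"
  proof -
    have "continuous_on \<Omega> A1'" using CA'(1) unfolding C1_on_def by blast
    then show ?thesis using magnetic_poincare_pd1[OF \<Omega> K(1,2) w0 Cw _ L h] by blast
  qed
  also have "\<dots> \<le> (4 * L\<^sup>2 / h\<^sup>2) * Q"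
  proof (rule mult_left_mono)
    have "integral UNIV (\<lambda>x. (cmod (Pi1 h A1' w x))\<^sup>2)
        \<le> integral UNIV (\<lambda>x. (cmod (Pi1 h A1' w x + \<i> * Pi2 h A2' w x))\<^sup>2)"
      by (rule integral_Pi1_le_Pi_sum_curl_free[OF \<Omega> K(1,2) w0 Cw CA' curl_free])
    also have "\<dots> \<le> Q"
      unfolding Q_def A1'_def A2'_def w_def
      by (rule integral_Pi_sum_exp_weight_le[OF \<Omega> K(1,2,3,4) A1 A2 C\<psi>(1) \<psi>_nonpos h])
    finally show "integral UNIV (\<lambda>x. (cmod (Pi1 h A1' w x))\<^sup>2) \<le> Q" .
  qed simp
  finally have "exp (2 * m / h) * N \<le> (4 * L\<^sup>2 / h\<^sup>2) * Q" .
  then have "h\<^sup>2 * exp (2 * m / h) / (4 * L\<^sup>2) \<le> Q / N"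
    using N0 h L0 by (simp add: field_simps)
  then show ?thesis
    using pauli_quotient_eq_Pi_sum[OF \<Omega> u(1) A1 A2 curl, of h] unfolding Q_def N_def by simp
qed

lemma pauli_lambda_lower_bound:
  fixes \<Omega> :: "(real \<times> real) set" and A1 A2 B \<psi> :: "real \<times> real \<Rightarrow> real"
  assumes \<Omega>: "open \<Omega>" "\<Omega> \<noteq> {}" and h: "h > 0"
    and \<psi>: "Ck_on 2 \<Omega> \<psi>" and \<psi>_nonpos: "\<And>x. x \<in> \<Omega> \<Longrightarrow> \<psi> x \<le> 0"
    and \<psi>_ge: "\<And>x. x \<in> \<Omega> \<Longrightarrow> m \<le> \<psi> x"
    and lap: "\<And>x. x \<in> \<Omega> \<Longrightarrow> pd1 (pd1 \<psi>) x + pd2 (pd2 \<psi>) x = B x"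
    and A1: "C1_on \<Omega> A1" and A2: "C1_on \<Omega> A2" and curl: "\<And>x. x \<in> \<Omega> \<Longrightarrow> pd1 A2 x - pd2 A1 x = B x"
    and L: "\<And>x. x \<in> \<Omega> \<Longrightarrow> \<bar>fst x\<bar> \<le> L" and L0: "L > 0"
  shows "h\<^sup>2 * exp (2 * m / h) / (4 * L\<^sup>2) \<le> pauli_lambda h A1 A2 B \<Omega>"
  unfolding pauli_lambda_def
proof (rule cInf_greatest)
  show "{pauli_quotient h A1 A2 B \<Omega> u |u. test_fun \<Omega> u \<and> (\<exists>x. u x \<noteq> 0)} \<noteq> {}"
    using test_fun_exists[OF \<Omega>] by blast
  fix q assume "q \<in> {pauli_quotient h A1 A2 B \<Omega> u |u. test_fun \<Omega> u \<and> (\<exists>x. u x \<noteq> 0)}"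
  then obtain u x0 where "q = pauli_quotient h A1 A2 B \<Omega> u" "test_fun \<Omega> u" "u x0 \<noteq> 0" by blast
  then show "h\<^sup>2 * exp (2 * m / h) / (4 * L\<^sup>2) \<le> q"
    using pauli_quotient_lower_bound[OF \<Omega>(1) h _ _ \<psi> \<psi>_nonpos \<psi>_ge lap A1 A2 curl L L0] by blast
qed

lemma tendsto_mult_ln_at_right_0: "((\<lambda>h::real. h * ln h) \<longlongrightarrow> 0) (at_right 0)"
proof -
  have "((\<lambda>h::real. - (ln (inverse h) / inverse h)) \<longlongrightarrow> - 0) (at_right 0)"
    by (intro tendsto_minus filterlim_compose[OF ln_x_over_x_tendsto_0 filterlim_inverse_at_top_right])
  moreover have "\<forall>\<^sub>F h in at_right 0. - (ln (inverse h) / inverse h) = h * ln (h::real)"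
    using eventually_at_right_less[of "0::real"] by eventually_elim (simp add: ln_inverse divide_inverse)
  ultimately show ?thesis by (simp add: tendsto_cong)
qed

lemma Liminf_h_ln_ge:
  fixes f :: "real \<Rightarrow> real" and m L :: real
  assumes L: "L > 0" and f: "\<And>h. h > 0 \<Longrightarrow> h\<^sup>2 * exp (2 * m / h) / (4 * L\<^sup>2) \<le> f h"
  shows "ereal (2 * m) \<le> Liminf (at_right 0) (\<lambda>h. ereal (h * ln (f h)))"
proof -
  define g where "g = (\<lambda>h::real. 2 * m + 2 * (h * ln h) - h * ln (4 * L\<^sup>2))"
  have g_le: "g h \<le> h * ln (f h)" if h: "h > 0" for h
  proof -
    have "g h = h * ln (h\<^sup>2 * exp (2 * m / h) / (4 * L\<^sup>2))"
      unfolding g_def using h L by (simp add: ln_div ln_mult ln_realpow field_simps)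
    also have "\<dots> \<le> h * ln (f h)"
      using f[OF h] h L by (intro mult_left_mono ln_mono) auto
    finally show ?thesis .
  qed
  have "(g \<longlongrightarrow> 2 * m + 2 * 0 - 0 * ln (4 * L\<^sup>2)) (at_right 0)"
    unfolding g_def by (intro tendsto_intros tendsto_mult_ln_at_right_0)
  then have "Liminf (at_right 0) (\<lambda>h. ereal (g h)) = ereal (2 * m)"
    by (intro lim_imp_Liminf) (auto intro: tendsto_ereal)
  moreover have "Liminf (at_right 0) (\<lambda>h. ereal (g h)) \<le> Liminf (at_right 0) (\<lambda>h. ereal (h * ln (f h)))"
    by (rule Liminf_mono) (use eventually_at_right_less[of "0::real"] in \<open>eventually_elim, simp add: g_le\<close>)
  ultimately show ?thesis by simp
qed

lemma Inf_image_le: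
  fixes f :: "'a::heine_borel \<Rightarrow> real"
  assumes "continuous_on (closure S) f" "bounded S" "x \<in> S"
  shows "Inf (f ` S) \<le> f x"
proof -
  have "bdd_below (f ` closure S)"
    using assms(1,2) by (intro bounded_imp_bdd_below compact_imp_bounded compact_continuous_image) auto
  then have "bdd_below (f ` S)" by (rule bdd_below_mono) (use closure_subset in blast)
  then show ?thesis using assms(3) by (simp add: cInf_lower)
qed

theorem corollary5p3:
  fixes \<Omega> :: "(real \<times> real) set"
    and B \<psi>0 A1 A2 :: "real \<times> real \<Rightarrow> real"
  assumes dom: "smooth_bounded_domain \<Omega>"
    and B_smooth: "smooth_closure \<Omega> B"
    and B_pos: "\<forall>x\<in>closure \<Omega>. B x > 0"
    and psi_reg: "Ck_on 2 \<Omega> \<psi>0" "continuous_on (closure \<Omega>) \<psi>0"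
    and psi_eq: "\<forall>x\<in>\<Omega>. pd1 (pd1 \<psi>0) x + pd2 (pd2 \<psi>0) x = B x"
    and psi_bd: "\<forall>x\<in>frontier \<Omega>. \<psi>0 x = 0"
    and A_C1: "Ck_closure 1 \<Omega> A1" "Ck_closure 1 \<Omega> A2"
    and curl: "\<forall>x\<in>\<Omega>. pd1 A2 x - pd2 A1 x = B x"
  shows "ereal (2 * Inf (\<psi>0 ` \<Omega>))
           \<le> Liminf (at_right 0) (\<lambda>h. ereal (h * ln (pauli_lambda h A1 A2 B \<Omega>)))"
proof -
  have \<Omega>: "open \<Omega>" "bounded \<Omega>" "\<Omega> \<noteq> {}"
    using dom unfolding smooth_bounded_domain_def by auto
  obtain L where L: "L > 0" "\<And>x. x \<in> \<Omega> \<Longrightarrow> \<bar>fst x\<bar> < L \<and> \<bar>snd x\<bar> < L"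
    using bounded_subset_square[OF \<Omega>(2)] by auto
  have lap_pos: "pd1 (pd1 \<psi>0) x + pd2 (pd2 \<psi>0) x > 0" if "x \<in> \<Omega>" for x
    using psi_eq B_pos closure_subset that by fastforce
  have \<psi>_nonpos: "\<psi>0 x \<le> 0" if "x \<in> \<Omega>" for x
    using max_principle_strict_subharmonic[OF \<Omega>(1,2) psi_reg(2,1) lap_pos _ that] psi_bd by blast
  have "h\<^sup>2 * exp (2 * Inf (\<psi>0 ` \<Omega>) / h) / (4 * L\<^sup>2) \<le> pauli_lambda h A1 A2 B \<Omega>" if "h > 0" for h
    using pauli_lambda_lower_bound[OF \<Omega>(1,3) that psi_reg(1) \<psi>_nonpos Inf_image_le[OF psi_reg(2) \<Omega>(2)] _
        Ck_closure_1_imp_C1_on[OF A_C1(1)] Ck_closure_1_imp_C1_on[OF A_C1(2)] _ _ L(1)]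
      psi_eq curl L(2) by (simp add: less_imp_le)
  then show ?thesis by (rule Liminf_h_ln_ge[OF L(1)])
qed

end
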